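(* Let $\mathcal{X},\mathcal{Y}$ be finite, $|\mathcal{X}|\ge2$, $I_{\max}=\log_2\min(|\mathcal{X}|,|\mathcal{Y}|)$, $n\ge3$ an integer and $K\ge2I_{\max}$. Let $W_1,\dots,W_n$ be channels and partition $\{1,\dots,n\}$ into $B+1$ consecutive blocks of positive lengths $m_1,\dots,m_{B+1}$ ($\sum_i m_i=n$); let $\overline W_i$ be the average of the $W_t$ over block $i$ and $\overline W=\frac1n\sum_{t=1}^nW_t$. Let $\lambda^*=\left(K|\mathcal{X}|(|\mathcal{X}|-1)I_{\max}^{-1}\frac{\ln n}{n}\right)^{1/3}$, set $\lambda=\lambda^*$ if $\lambda^*<1$ (and let $\lambda\in(0,1)$ be arbitrary otherwise), let $\eta=\sqrt{\frac{|\mathcal{X}|-1}{K|\mathcal{X}|I_{\max}}\cdot\frac{\lambda\ln n}{n}}$, and let $\hat Q_1,\dots,\hat Q_{B+1}$ be defined by $$w_i(Q)=\frac{e^{\eta\sum_{j<i}m_jI(Q,\overline W_j)}}{\int_{\Delta_{\mathcal{X}}}e^{\eta\sum_{j<i}m_jI(\tilde Q,\overline W_j)}d\tilde Q},\qquad \hat Q_i=(1-\lambda)\int_{\Delta_{\mathcal{X}}}w_i(Q)Q\,dQ+\lambda U.$$ Suppose $m_i\,I(\hat Q_i,\overline W_i)\le K$ for every $i=1,\dots,B+1$. Then $$\frac{KB}{n}\ge C(\overline W)-4\,I_{\max}^{2/3}|\mathcal{X}|^{2/3}K^{1/3}\left(\frac{\ln n}{n}\right)^{1/3}.$$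
   Context: A channel is a conditional pmf $W(y|x)$; $I(Q,W)$ is the mutual information in bits of the joint law $Q(x)W(y|x)$ and $C(W)=\max_QI(Q,W)$. $U$ is the uniform distribution on $\mathcal{X}$, $\Delta_{\mathcal{X}}$ the probability simplex with $(|\mathcal{X}|-1)$-dimensional Lebesgue measure. The average of channels is taken entrywise: $\overline W_i(y|x)=\frac1{m_i}\sum_{t\in\text{block }i}W_t(y|x)$. *)

theory Defs
  imports "HOL-Analysis.Analysis"
begin

definition is_pmf :: "('x::finite \<Rightarrow> real) \<Rightarrow> bool" where
  "is_pmf Q \<longleftrightarrow> (\<forall>x. Q x \<ge> 0) \<and> (\<Sum>x\<in>UNIV. Q x) = 1"

definition prob_simplex :: "('x::finite \<Rightarrow> real) set" where
  "prob_simplex = {Q. is_pmf Q}"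

definition is_channel :: "('x::finite \<Rightarrow> 'y::finite \<Rightarrow> real) \<Rightarrow> bool" where
  "is_channel W \<longleftrightarrow> (\<forall>x. is_pmf (W x))"

definition out_dist :: "('x::finite \<Rightarrow> real) \<Rightarrow> ('x \<Rightarrow> 'y \<Rightarrow> real) \<Rightarrow> 'y \<Rightarrow> real" where
  "out_dist Q W y = (\<Sum>x\<in>UNIV. Q x * W x y)"

definition mutual_info :: "('x::finite \<Rightarrow> real) \<Rightarrow> ('x \<Rightarrow> 'y::finite \<Rightarrow> real) \<Rightarrow> real" where
  "mutual_info Q W =
     (\<Sum>x\<in>UNIV. \<Sum>y\<in>UNIV.
        if Q x * W x y > 0 then Q x * W x y * log 2 (W x y / out_dist Q W y) else 0)"

definition capacity :: "('x::finite \<Rightarrow> 'y::finite \<Rightarrow> real) \<Rightarrow> real" where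
  "capacity W = (SUP Q\<in>prob_simplex. mutual_info Q W)"

definition unif :: "'x::finite \<Rightarrow> real" where
  "unif x = 1 / real CARD('x)"

text \<open>Integration over the probability simplex w.r.t. (|X|-1)-dimensional Lebesgue
  measure: the simplex is parametrised by the coordinates other than a fixed
  element x0 (the remaining coordinate being 1 minus their sum).\<close>

definition x0 :: "'x" where "x0 = (SOME x. True)"

definition simplex_ext :: "('x \<Rightarrow> real) \<Rightarrow> ('x::finite \<Rightarrow> real)" where
  "simplex_ext q = (\<lambda>x. if x = x0 then 1 - (\<Sum>x'\<in>UNIV - {x0}. q x') else q x)"

definition simplex_param :: "('x::finite \<Rightarrow> real) set" where
  "simplex_param = {q \<in> space (PiM (UNIV - {x0}) (\<lambda>_. lborel)).
       (\<forall>x\<in>UNIV - {x0}. q x \<ge> 0) \<and> (\<Sum>x\<in>UNIV - {x0}. q x) \<le> 1}"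

definition simplex_integral :: "(('x::finite \<Rightarrow> real) \<Rightarrow> real) \<Rightarrow> real" where
  "simplex_integral f =
     set_lebesgue_integral (PiM (UNIV - {x0}) (\<lambda>_. lborel)) simplex_param
       (\<lambda>q. f (simplex_ext q))"

text \<open>Blocks: block i (for 1 \<le> i) consists of the indices s_i+1, ..., s_i+m_i
  where s_i = m_1 + ... + m_(i-1).\<close>

definition block :: "(nat \<Rightarrow> nat) \<Rightarrow> nat \<Rightarrow> nat set" where
  "block m i = {(\<Sum>j\<in>{1..<i}. m j) + 1 .. (\<Sum>j\<in>{1..<i}. m j) + m i}"

definition block_avg ::
  "(nat \<Rightarrow> 'x \<Rightarrow> 'y \<Rightarrow> real) \<Rightarrow> (nat \<Rightarrow> nat) \<Rightarrow> nat \<Rightarrow> 'x \<Rightarrow> 'y \<Rightarrow> real" where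
  "block_avg W m i = (\<lambda>x y. (1 / real (m i)) * (\<Sum>t\<in>block m i. W t x y))"

definition total_avg :: "(nat \<Rightarrow> 'x \<Rightarrow> 'y \<Rightarrow> real) \<Rightarrow> nat \<Rightarrow> 'x \<Rightarrow> 'y \<Rightarrow> real" where
  "total_avg W n = (\<lambda>x y. (1 / real n) * (\<Sum>t\<in>{1..n}. W t x y))"

definition potential ::
  "real \<Rightarrow> (nat \<Rightarrow> 'x::finite \<Rightarrow> 'y::finite \<Rightarrow> real) \<Rightarrow> (nat \<Rightarrow> nat) \<Rightarrow> nat \<Rightarrow> ('x \<Rightarrow> real) \<Rightarrow> real" where
  "potential \<eta> W m i Q = \<eta> * (\<Sum>j\<in>{1..<i}. real (m j) * mutual_info Q (block_avg W m j))"

definition Qhat ::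
  "real \<Rightarrow> real \<Rightarrow> (nat \<Rightarrow> 'x::finite \<Rightarrow> 'y::finite \<Rightarrow> real) \<Rightarrow> (nat \<Rightarrow> nat) \<Rightarrow> nat \<Rightarrow> 'x \<Rightarrow> real" where
  "Qhat lam \<eta> W m i = (\<lambda>x.
     (1 - lam) * (simplex_integral (\<lambda>Q. exp (potential \<eta> W m i Q) * Q x)
                / simplex_integral (\<lambda>Q. exp (potential \<eta> W m i Q)))
     + lam * unif x)"

end

theory Submission
  imports Defs
begin

(* Write Z_i for the integral over the simplex of exp(Phi_i(Q)), where the potential is
   Phi_i(Q) = eta * sum_{j<i} m_j I(Q, Wbar_j).  The proof compares two bounds on Z_{B+2}.
   Upper bound: the mixed strategy Qhat_i satisfies Qhat_i >= lam/|X|; with the "golden formula"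
   I(Q,V) <= sum_x Q(x) D(V(.|x) || Qhat_i V) this makes the hypothesis m_i I(Qhat_i, Wbar_i) <= K
   control every exponent increment, giving Z_{i+1} <= Z_i (1 + eta(1+lam)K/(1-lam)).
   Lower bound: by convexity of I in the channel, Phi_{B+2}(Q) >= eta n I(Q, Wbar); all Q with
   Q >= (1-eps) Q* satisfy I(Q,Wbar) >= (1-eps) I(Q*,Wbar) and form a sub-simplex of volume
   eps^(|X|-1)/(|X|-1)!.  Taking eps = 1/n yields a regret inequality, which the choice of lam and
   eta turns into the claim; if lam* >= 1 the claim is trivial because I <= Imax. *)

lemma pmf_nonneg: "is_pmf Q \<Longrightarrow> Q x \<ge> 0"
  by (simp add: is_pmf_def)

lemma pmf_sum: "is_pmf Q \<Longrightarrow> (\<Sum>x\<in>UNIV. Q x) = 1"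
  by (simp add: is_pmf_def)

lemma pmf_le1:
  assumes "is_pmf Q"
  shows "Q x \<le> 1"
proof -
  have "Q x \<le> (\<Sum>x\<in>UNIV. Q x)"
    by (rule member_le_sum) (auto simp: pmf_nonneg[OF assms])
  thus ?thesis using pmf_sum[OF assms] by simp
qed

lemma unif_pmf: "is_pmf (unif :: 'x::finite \<Rightarrow> real)"
  by (simp add: is_pmf_def unif_def)

lemma channel_pmf: "is_channel W \<Longrightarrow> is_pmf (W x)"
  by (simp add: is_channel_def)

lemma out_dist_nonneg: "is_pmf Q \<Longrightarrow> is_channel W \<Longrightarrow> out_dist Q W y \<ge> 0"
  unfolding out_dist_def is_channel_def
  by (intro sum_nonneg mult_nonneg_nonneg) (auto simp: pmf_nonneg)

lemma out_dist_ge: "is_pmf Q \<Longrightarrow> is_channel W \<Longrightarrow> Q x * W x y \<le> out_dist Q W y"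
  unfolding out_dist_def is_channel_def
  by (rule member_le_sum[where f="\<lambda>x. Q x * W x y"]) (auto simp: pmf_nonneg)

lemma out_dist_pos:
  "is_pmf Q \<Longrightarrow> is_channel W \<Longrightarrow> Q x > 0 \<Longrightarrow> W x y > 0 \<Longrightarrow> out_dist Q W y > 0"
  using out_dist_ge[of Q W x y] mult_pos_pos[of "Q x" "W x y"] by linarith

lemma out_dist_pmf:
  assumes q: "is_pmf Q" and w: "is_channel W"
  shows "is_pmf (out_dist Q W)"
proof -
  have "(\<Sum>y\<in>UNIV. out_dist Q W y) = (\<Sum>x\<in>UNIV. Q x * (\<Sum>y\<in>UNIV. W x y))"
    unfolding out_dist_def by (subst sum.swap) (simp add: sum_distrib_left)
  also have "\<dots> = 1" using w q by (simp add: is_channel_def pmf_sum)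
  finally show ?thesis using out_dist_nonneg[OF q w] by (simp add: is_pmf_def)
qed

lemma gibbs_inequality:
  fixes p r :: "'a \<Rightarrow> real"
  assumes "finite A" "\<And>y. y \<in> A \<Longrightarrow> p y \<ge> 0" "sum p A = 1"
    "\<And>y. y \<in> A \<Longrightarrow> r y \<ge> 0" "sum r A \<le> 1"
    "\<And>y. y \<in> A \<Longrightarrow> p y > 0 \<Longrightarrow> r y > 0"
  shows "0 \<le> (\<Sum>y\<in>A. if p y > 0 then p y * log 2 (p y / r y) else 0)"
proof -
  have term_bound: "(p y - r y) / ln 2 \<le> (if p y > 0 then p y * log 2 (p y / r y) else 0)"
    if y: "y \<in> A" for y
  proof (cases "p y > 0")
    case True
    have r: "r y > 0" using assms(6) y True by auto
    have "ln (r y / p y) \<le> r y / p y - 1" using r True by (intro ln_le_minus_one) auto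
    hence "p y * (- ln (p y / r y)) \<le> p y * (r y / p y - 1)"
      using r True by (intro mult_left_mono) (auto simp: ln_div)
    also have "p y * (r y / p y - 1) = r y - p y" using True by (simp add: field_simps)
    finally have "(p y - r y) / ln 2 \<le> p y * ln (p y / r y) / ln 2"
      by (intro divide_right_mono) auto
    thus ?thesis using True by (simp add: log_def)
  next
    case False
    thus ?thesis using assms(4)[OF y] by (simp add: divide_nonpos_nonneg)
  qed
  have "0 \<le> (\<Sum>y\<in>A. (p y - r y) / ln 2)"
    using assms(3,5) by (simp add: sum_divide_distrib[symmetric] sum_subtractf)
  also have "\<dots> \<le> (\<Sum>y\<in>A. if p y > 0 then p y * log 2 (p y / r y) else 0)"
    by (intro sum_mono term_bound)
  finally show ?thesis .
qed

text \<open>Mutual information is the average divergence from the output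
  distribution; the golden formula below says that any other \<open>R\<close> gives an upper bound.\<close>

definition row_div :: "('x::finite \<Rightarrow> 'y::finite \<Rightarrow> real) \<Rightarrow> 'x \<Rightarrow> ('y \<Rightarrow> real) \<Rightarrow> real" where
  "row_div W x R = (\<Sum>y\<in>UNIV. if W x y > 0 then W x y * log 2 (W x y / R y) else 0)"

definition avg_div :: "('x::finite \<Rightarrow> real) \<Rightarrow> ('x \<Rightarrow> 'y::finite \<Rightarrow> real) \<Rightarrow> ('y \<Rightarrow> real) \<Rightarrow> real" where
  "avg_div Q W R = (\<Sum>x\<in>UNIV. \<Sum>y\<in>UNIV.
        if Q x * W x y > 0 then Q x * W x y * log 2 (W x y / R y) else 0)"

lemma mutual_info_avg_div: "mutual_info Q W = avg_div Q W (out_dist Q W)"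
  by (simp add: mutual_info_def avg_div_def)

lemma avg_div_row_div:
  assumes "\<And>x. Q x \<ge> 0"
  shows "avg_div Q W R = (\<Sum>x\<in>UNIV. Q x * row_div W x R)"
  unfolding avg_div_def row_div_def
proof (intro sum.cong refl)
  fix x
  show "(\<Sum>y\<in>UNIV. if Q x * W x y > 0 then Q x * W x y * log 2 (W x y / R y) else 0) =
        Q x * (\<Sum>y\<in>UNIV. if W x y > 0 then W x y * log 2 (W x y / R y) else 0)"
  proof (cases "Q x > 0")
    case True
    then show ?thesis unfolding sum_distrib_left
      by (intro sum.cong) (auto simp: zero_less_mult_iff mult.assoc)
  next
    case False
    then show ?thesis using assms[of x] by simp
  qed
qed

lemma row_div_nonneg:
  assumes "is_pmf (W x)" "\<And>y. R y \<ge> 0" "(\<Sum>y\<in>UNIV. R y) \<le> 1"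
    "\<And>y. W x y > 0 \<Longrightarrow> R y > 0"
  shows "row_div W x R \<ge> 0"
  unfolding row_div_def
  by (rule gibbs_inequality[where p="W x"]) (use assms in \<open>auto simp: is_pmf_def\<close>)

text \<open>Golden formula: \<open>I(Q,W) \<le> \<Sum>\<^sub>x Q(x) D(W(\<cdot>|x) \<parallel> R)\<close> for every sub-probability
  vector \<open>R\<close> that is positive wherever the joint law is; the gap is \<open>D(QW \<parallel> R)\<close>.\<close>

lemma mutual_info_le_avg_div:
  assumes q: "is_pmf Q" and w: "is_channel W"
    and r: "\<And>y. R y \<ge> 0" "(\<Sum>y\<in>UNIV. R y) \<le> 1"
    and supp: "\<And>x y. Q x * W x y > 0 \<Longrightarrow> R y > 0"
  shows "mutual_info Q W \<le> avg_div Q W R"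
proof -
  define Out where "Out = out_dist Q W"
  have QW: "Q x * W x y \<ge> 0" for x y
    using q w by (simp add: pmf_nonneg is_channel_def)
  have "avg_div Q W R - mutual_info Q W = (\<Sum>x\<in>UNIV. \<Sum>y\<in>UNIV. Q x * W x y * log 2 (Out y / R y))"
    unfolding mutual_info_avg_div avg_div_def Out_def[symmetric] sum_subtractf[symmetric]
  proof (intro sum.cong refl)
    fix x y
    show "(if Q x * W x y > 0 then Q x * W x y * log 2 (W x y / R y) else 0) -
          (if Q x * W x y > 0 then Q x * W x y * log 2 (W x y / Out y) else 0) =
          Q x * W x y * log 2 (Out y / R y)"
    proof (cases "Q x * W x y > 0")
      case True
      have "W x y > 0" "Q x > 0" using True pmf_nonneg[OF q, of x]
        by (auto simp: zero_less_mult_iff)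
      moreover have "R y > 0" "Out y > 0"
        using supp[OF True] out_dist_pos[OF q w calculation(2,1)] by (auto simp: Out_def)
      ultimately show ?thesis using True by (simp add: log_divide algebra_simps)
    next
      case False
      then have "Q x * W x y = 0" using QW[of x y] by auto
      then show ?thesis using False by (simp del: mult_eq_0_iff)
    qed
  qed
  also have "\<dots> = (\<Sum>y\<in>UNIV. Out y * log 2 (Out y / R y))"
    by (subst sum.swap) (simp add: Out_def out_dist_def sum_distrib_right)
  also have "\<dots> = (\<Sum>y\<in>UNIV. if Out y > 0 then Out y * log 2 (Out y / R y) else 0)"
    using out_dist_nonneg[OF q w] by (intro sum.cong) (auto simp: Out_def less_eq_real_def)
  also have "\<dots> \<ge> 0"
  proof (rule gibbs_inequality)
    show "sum Out UNIV = 1" using out_dist_pmf[OF q w] by (simp add: Out_def is_pmf_def)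
    show "Out y \<ge> 0" for y using out_dist_nonneg[OF q w] by (simp add: Out_def)
    show "R y > 0" if "Out y > 0" for y
    proof -
      have "\<exists>x. Q x * W x y > 0"
      proof (rule ccontr)
        assume "\<nexists>x. Q x * W x y > 0"
        then have "Out y \<le> 0" unfolding Out_def out_dist_def by (intro sum_nonpos) (simp add: not_less)
        with that show False by simp
      qed
      then show ?thesis using supp by auto
    qed
  qed (use r in auto)
  finally show ?thesis by simp
qed

lemma row_div_out_dist_nonneg:
  assumes q: "is_pmf Q" and w: "is_channel W" and "Q x > 0"
  shows "row_div W x (out_dist Q W) \<ge> 0"
  by (rule row_div_nonneg)
    (use assms out_dist_pos[OF q w] out_dist_nonneg[OF q w] out_dist_pmf[OF q w] in
      \<open>auto simp: channel_pmf pmf_sum\<close>)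

lemma mutual_info_nonneg:
  assumes q: "is_pmf Q" and w: "is_channel W"
  shows "mutual_info Q W \<ge> 0"
proof -
  have "mutual_info Q W = (\<Sum>x\<in>UNIV. Q x * row_div W x (out_dist Q W))"
    by (simp add: mutual_info_avg_div avg_div_row_div pmf_nonneg[OF q])
  also have "\<dots> \<ge> 0"
  proof (intro sum_nonneg)
    fix x
    show "0 \<le> Q x * row_div W x (out_dist Q W)"
      using row_div_out_dist_nonneg[OF q w] pmf_nonneg[OF q, of x]
      by (cases "Q x > 0") auto
  qed
  finally show ?thesis .
qed

text \<open>Upper bounds \<open>I(Q,W) \<le> log |Y|\<close> (golden formula with the uniform output vector) and
  \<open>I(Q,W) \<le> H(Q) \<le> log |X|\<close>; together they give \<open>I(Q,W) \<le> Imax\<close>.\<close>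

lemma mutual_info_le_log_card_out:
  assumes q: "is_pmf Q" and w: "is_channel (W::'x::finite \<Rightarrow> 'y::finite \<Rightarrow> real)"
  shows "mutual_info Q W \<le> log 2 (real CARD('y))"
proof -
  define c where "c = real CARD('y)"
  have c: "c \<ge> 1" by (simp add: c_def Suc_le_eq card_gt_0_iff)
  define R where "R = (\<lambda>y::'y. 1 / c)"
  have row_bound: "row_div W x R \<le> log 2 c" for x
  proof -
    have wx: "is_pmf (W x)" using w by (rule channel_pmf)
    have "row_div W x R \<le> (\<Sum>y\<in>UNIV. W x y * log 2 c)"
      unfolding row_div_def
    proof (intro sum_mono)
      fix y
      show "(if W x y > 0 then W x y * log 2 (W x y / R y) else 0) \<le> W x y * log 2 c"
      proof (cases "W x y > 0")
        case True
        have "log 2 (W x y / R y) = log 2 (W x y) + log 2 c"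
          using True c by (simp add: R_def log_mult)
        moreover have "W x y * log 2 (W x y) \<le> 0"
          using True pmf_le1[OF wx, of y] by (simp add: mult_nonneg_nonpos)
        ultimately show ?thesis using True by (simp add: algebra_simps)
      next
        case False
        then show ?thesis using pmf_nonneg[OF wx, of y] by simp
      qed
    qed
    also have "\<dots> = log 2 c" using pmf_sum[OF wx] by (simp add: sum_distrib_right[symmetric])
    finally show ?thesis .
  qed
  have "mutual_info Q W \<le> avg_div Q W R"
    by (rule mutual_info_le_avg_div[OF q w]) (use c in \<open>auto simp: R_def c_def\<close>)
  also have "\<dots> = (\<Sum>x\<in>UNIV. Q x * row_div W x R)" by (simp add: avg_div_row_div pmf_nonneg[OF q])
  also have "\<dots> \<le> (\<Sum>x\<in>UNIV. Q x * log 2 c)"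
    by (intro sum_mono mult_left_mono row_bound) (simp add: pmf_nonneg[OF q])
  also have "\<dots> = log 2 c" using pmf_sum[OF q] by (simp add: sum_distrib_right[symmetric])
  finally show ?thesis by (simp add: c_def)
qed

lemma entropy_le_log_card:
  assumes q: "is_pmf (Q::'x::finite \<Rightarrow> real)"
  shows "(\<Sum>x\<in>UNIV. if Q x > 0 then - Q x * log 2 (Q x) else 0) \<le> log 2 (real CARD('x))"
proof -
  define c where "c = real CARD('x)"
  have c: "c \<ge> 1" by (simp add: c_def Suc_le_eq card_gt_0_iff)
  have "0 \<le> (\<Sum>x\<in>UNIV. if Q x > 0 then Q x * log 2 (Q x / (1/c)) else 0)"
    by (rule gibbs_inequality) (use q c in \<open>auto simp: is_pmf_def c_def\<close>)
  also have "\<dots> = (\<Sum>x\<in>UNIV. (if Q x > 0 then Q x * log 2 (Q x) else 0) + Q x * log 2 c)"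
  proof (intro sum.cong refl)
    fix x
    show "(if Q x > 0 then Q x * log 2 (Q x / (1/c)) else 0) =
        (if Q x > 0 then Q x * log 2 (Q x) else 0) + Q x * log 2 c"
      using c pmf_nonneg[OF q, of x] by (auto simp: log_mult algebra_simps)
  qed
  also have "\<dots> = (\<Sum>x\<in>UNIV. (if Q x > 0 then Q x * log 2 (Q x) else 0)) + log 2 c"
    using pmf_sum[OF q] by (simp add: sum.distrib sum_distrib_right[symmetric])
  moreover have "(\<Sum>x\<in>UNIV. if Q x > 0 then - Q x * log 2 (Q x) else 0) =
     - (\<Sum>x\<in>UNIV. if Q x > 0 then Q x * log 2 (Q x) else 0)"
    by (simp add: sum_negf[symmetric] if_distrib cong: if_cong)
  ultimately show ?thesis by (simp add: c_def)
qed

lemma mutual_info_le_log_card_in: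
  assumes q: "is_pmf Q" and w: "is_channel (W::'x::finite \<Rightarrow> 'y::finite \<Rightarrow> real)"
  shows "mutual_info Q W \<le> log 2 (real CARD('x))"
proof -
  have "mutual_info Q W \<le> (\<Sum>x\<in>UNIV. \<Sum>y\<in>UNIV. if Q x > 0 then - Q x * log 2 (Q x) * W x y else 0)"
    unfolding mutual_info_def
  proof (intro sum_mono)
    fix x y
    show "(if Q x * W x y > 0 then Q x * W x y * log 2 (W x y / out_dist Q W y) else 0)
        \<le> (if Q x > 0 then - Q x * log 2 (Q x) * W x y else 0)"
    proof (cases "Q x * W x y > 0")
      case True
      have qx: "Q x > 0" and wxy: "W x y > 0" using True pmf_nonneg[OF q, of x]
        by (auto simp: zero_less_mult_iff)
      have o: "out_dist Q W y \<ge> Q x * W x y" by (rule out_dist_ge[OF q w])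
      have "W x y / out_dist Q W y \<le> W x y / (Q x * W x y)"
        using o True wxy by (intro divide_left_mono) auto
      also have "\<dots> = 1 / Q x" using wxy by simp
      finally have "log 2 (W x y / out_dist Q W y) \<le> log 2 (1 / Q x)"
        using out_dist_pos[OF q w qx wxy] wxy qx by (subst log_le_cancel_iff) auto
      also have "\<dots> = - log 2 (Q x)" using qx by (simp add: log_divide)
      finally have "log 2 (W x y / out_dist Q W y) \<le> - log 2 (Q x)" .
      then have "Q x * W x y * log 2 (W x y / out_dist Q W y) \<le> Q x * W x y * (- log 2 (Q x))"
        using True by (intro mult_left_mono) auto
      then show ?thesis using qx True by (simp add: algebra_simps)
    next
      case False
      have "W x y \<ge> 0" using w by (simp add: pmf_nonneg channel_pmf)
      moreover have "- Q x * log 2 (Q x) \<ge> 0" if "Q x > 0"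
        using that pmf_le1[OF q, of x] by (simp add: mult_nonneg_nonpos)
      ultimately show ?thesis using False by (auto intro: mult_nonneg_nonneg mult_nonpos_nonneg)
    qed
  qed
  also have "\<dots> = (\<Sum>x\<in>UNIV. if Q x > 0 then - Q x * log 2 (Q x) else 0)"
  proof (intro sum.cong refl)
    fix x
    have "(\<Sum>y\<in>UNIV. - Q x * log 2 (Q x) * W x y) = - Q x * log 2 (Q x) * (\<Sum>y\<in>UNIV. W x y)"
      by (simp add: sum_distrib_left)
    then show "(\<Sum>y\<in>UNIV. if Q x > 0 then - Q x * log 2 (Q x) * W x y else 0) =
          (if Q x > 0 then - Q x * log 2 (Q x) else 0)"
      using pmf_sum[OF channel_pmf[OF w]] by simp
  qed
  also have "\<dots> \<le> log 2 (real CARD('x))" by (rule entropy_le_log_card[OF q])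
  finally show ?thesis .
qed

lemma mutual_info_le_Imax:
  assumes q: "is_pmf Q" and w: "is_channel (W::'x::finite \<Rightarrow> 'y::finite \<Rightarrow> real)"
  shows "mutual_info Q W \<le> log 2 (real (min CARD('x) CARD('y)))"
  using mutual_info_le_log_card_in[OF q w] mutual_info_le_log_card_out[OF q w]
  by (cases "CARD('x) \<le> CARD('y)") (auto simp: min_def)

text \<open>The log-sum inequality, from Gibbs' inequality applied to the normalised vectors.\<close>

lemma log_sum_inequality:
  fixes a b :: "'a \<Rightarrow> real"
  assumes A: "finite A" and ab: "\<And>j. j \<in> A \<Longrightarrow> a j \<ge> 0" "\<And>j. j \<in> A \<Longrightarrow> b j \<ge> 0"
    "\<And>j. j \<in> A \<Longrightarrow> a j > 0 \<Longrightarrow> b j > 0"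
  shows "(if sum a A > 0 then sum a A * log 2 (sum a A / sum b A) else 0)
     \<le> (\<Sum>j\<in>A. if a j > 0 then a j * log 2 (a j / b j) else 0)" (is "?L \<le> ?R")
proof (cases "sum a A > 0")
  case False
  have "a j \<le> sum a A" if "j \<in> A" for j using A ab that by (intro member_le_sum) auto
  then have "?R = 0" using False by (intro sum.neutral) force
  then show ?thesis using False by simp
next
  case True
  define SA where "SA = sum a A"
  define SB where "SB = sum b A"
  obtain j where j: "j \<in> A" "a j > 0" using True
    by (metis less_numeral_extra(3) not_less sum_nonpos)
  have "b j \<le> SB" unfolding SB_def using A ab j by (intro member_le_sum) auto
  then have SB: "SB > 0" using ab(3) j by (meson less_le_trans)
  have SA: "SA > 0" using True by (simp add: SA_def)
  have "0 \<le> (\<Sum>j\<in>A. if a j / SA > 0 then a j / SA * log 2 ((a j / SA) / (b j / SB)) else 0)"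
  proof (rule gibbs_inequality[OF A])
    show "sum (\<lambda>j. a j / SA) A = 1" using SA by (simp add: SA_def sum_divide_distrib[symmetric])
    show "sum (\<lambda>j. b j / SB) A \<le> 1" using SB by (simp add: SB_def sum_divide_distrib[symmetric])
  qed (use ab SA SB in \<open>auto simp: zero_less_divide_iff\<close>)
  also have "\<dots> = (\<Sum>j\<in>A. (if a j > 0 then a j * log 2 (a j / b j) else 0) / SA
                        + (a j / SA) * log 2 (SB / SA))"
  proof (intro sum.cong refl)
    fix i assume i: "i \<in> A"
    show "(if a i / SA > 0 then a i / SA * log 2 ((a i / SA) / (b i / SB)) else 0) =
       (if a i > 0 then a i * log 2 (a i / b i) else 0) / SA + (a i / SA) * log 2 (SB / SA)"
    proof (cases "a i > 0")
      case True
      have bi: "b i > 0" using ab(3)[OF i True] .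
      have eq: "(a i / SA) / (b i / SB) = (a i / b i) * (SB / SA)" by (simp add: field_simps)
      have "log 2 ((a i / SA) / (b i / SB)) = log 2 (a i / b i) + log 2 (SB / SA)"
        unfolding eq using True bi SA SB by (subst log_mult) auto
      then show ?thesis using True SA by (simp add: field_simps)
    next
      case False
      then show ?thesis using ab(1)[OF i] by simp
    qed
  qed
  also have "\<dots> = ?R / SA + log 2 (SB / SA)"
    using SA by (simp add: sum.distrib sum_divide_distrib[symmetric] sum_distrib_right[symmetric] SA_def)
  finally have "log 2 (SA / SB) * SA \<le> ?R"
    using SA SB by (simp add: field_simps log_divide)
  then show ?thesis using True by (simp add: SA_def SB_def mult.commute)
qed

text \<open>Mutual information is convex in the channel: for a nonnegative combination of channels,
  \<open>I(Q, \<Sum>\<^sub>j \<alpha>\<^sub>j V\<^sub>j) \<le> \<Sum>\<^sub>j \<alpha>\<^sub>j I(Q, V\<^sub>j)\<close>.  The log-sum inequality gives this for the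
  contribution of each input-output pair separately.\<close>

definition info_term :: "('x::finite \<Rightarrow> real) \<Rightarrow> ('x \<Rightarrow> 'y::finite \<Rightarrow> real) \<Rightarrow> 'x \<Rightarrow> 'y \<Rightarrow> real" where
  "info_term Q W x y =
     (if Q x * W x y > 0 then Q x * W x y * log 2 (W x y / out_dist Q W y) else 0)"

lemma mutual_info_info_term: "mutual_info Q W = (\<Sum>x\<in>UNIV. \<Sum>y\<in>UNIV. info_term Q W x y)"
  by (simp add: mutual_info_def info_term_def)

lemma out_dist_mix:
  "out_dist Q (\<lambda>x y. \<Sum>j\<in>A. \<alpha> j * V j x y) y = (\<Sum>j\<in>A. \<alpha> j * out_dist Q (V j) y)"
  unfolding out_dist_def sum_distrib_left by (subst sum.swap) (simp add: mult_ac)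

lemma info_term_convex_channel:
  assumes q: "is_pmf Q" and A: "finite A" and V: "\<And>j. j \<in> A \<Longrightarrow> is_channel (V j)"
    and \<alpha>: "\<And>j. j \<in> A \<Longrightarrow> \<alpha> j \<ge> 0"
  shows "info_term Q (\<lambda>x y. \<Sum>j\<in>A. \<alpha> j * V j x y) x y \<le> (\<Sum>j\<in>A. \<alpha> j * info_term Q (V j) x y)"
proof -
  define Wm where "Wm = (\<lambda>x y. \<Sum>j\<in>A. \<alpha> j * V j x y)"
  have Vn: "V j x y \<ge> 0" if "j \<in> A" for j using V[OF that] by (simp add: channel_pmf pmf_nonneg)
  let ?a = "\<lambda>j. \<alpha> j * (Q x * V j x y)" and ?b = "\<lambda>j. \<alpha> j * (Q x * out_dist Q (V j) y)"
  have log_sum: "(if sum ?a A > 0 then sum ?a A * log 2 (sum ?a A / sum ?b A) else 0)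
    \<le> (\<Sum>j\<in>A. if ?a j > 0 then ?a j * log 2 (?a j / ?b j) else 0)"
  proof (rule log_sum_inequality[OF A])
    fix j assume j: "j \<in> A"
    show "0 \<le> ?a j" using \<alpha>[OF j] Vn[OF j] pmf_nonneg[OF q, of x] by simp
    show "0 \<le> ?b j" using \<alpha>[OF j] out_dist_nonneg[OF q V[OF j]] pmf_nonneg[OF q, of x] by simp
    assume "0 < ?a j"
    then have "\<alpha> j > 0" "Q x > 0" "V j x y > 0"
      using \<alpha>[OF j] Vn[OF j] pmf_nonneg[OF q, of x] by (auto simp: zero_less_mult_iff)
    then show "0 < ?b j" using out_dist_pos[OF q V[OF j]] by simp
  qed
  have sum_a: "sum ?a A = Q x * Wm x y"
    by (simp add: Wm_def sum_distrib_left mult_ac)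
  have sum_b: "sum ?b A = Q x * out_dist Q Wm y"
    by (simp add: Wm_def out_dist_mix sum_distrib_left mult_ac)
  have term_eq: "(if ?a j > 0 then ?a j * log 2 (?a j / ?b j) else 0) = \<alpha> j * info_term Q (V j) x y"
    if j: "j \<in> A" for j
  proof (cases "?a j > 0")
    case True
    then have "\<alpha> j > 0" "Q x > 0" "V j x y > 0"
      using \<alpha>[OF j] Vn[OF j] pmf_nonneg[OF q, of x] by (auto simp: zero_less_mult_iff)
    then show ?thesis using True by (simp add: info_term_def)
  next
    case False
    then have "\<alpha> j = 0 \<or> Q x * V j x y = 0"
      using \<alpha>[OF j] Vn[OF j] pmf_nonneg[OF q, of x]
      by (auto simp: zero_less_mult_iff less_eq_real_def)
    then show ?thesis using False by (auto simp: info_term_def)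
  qed
  have cancel: "(if Q x * Wm x y > 0 then Q x * Wm x y * log 2 (Q x * Wm x y / (Q x * out_dist Q Wm y)) else 0)
     = info_term Q Wm x y"
    by (cases "Q x = 0") (auto simp: info_term_def)
  have "info_term Q Wm x y \<le> (\<Sum>j\<in>A. \<alpha> j * info_term Q (V j) x y)"
    using log_sum unfolding sum_a sum_b cancel using sum.cong[OF refl term_eq, of A] by simp
  then show ?thesis by (simp add: Wm_def)
qed

lemma mutual_info_convex_channel:
  assumes q: "is_pmf Q" and A: "finite A" and V: "\<And>j. j \<in> A \<Longrightarrow> is_channel (V j)"
    and \<alpha>: "\<And>j. j \<in> A \<Longrightarrow> \<alpha> j \<ge> 0"
  shows "mutual_info Q (\<lambda>x y. \<Sum>j\<in>A. \<alpha> j * V j x y) \<le> (\<Sum>j\<in>A. \<alpha> j * mutual_info Q (V j))"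
proof -
  have "mutual_info Q (\<lambda>x y. \<Sum>j\<in>A. \<alpha> j * V j x y)
      \<le> (\<Sum>x\<in>UNIV. \<Sum>y\<in>UNIV. \<Sum>j\<in>A. \<alpha> j * info_term Q (V j) x y)"
    unfolding mutual_info_info_term by (intro sum_mono info_term_convex_channel[OF q A V \<alpha>])
  also have "\<dots> = (\<Sum>x\<in>UNIV. \<Sum>j\<in>A. \<Sum>y\<in>UNIV. \<alpha> j * info_term Q (V j) x y)"
    by (intro sum.cong refl) (rule sum.swap)
  also have "\<dots> = (\<Sum>j\<in>A. \<Sum>x\<in>UNIV. \<Sum>y\<in>UNIV. \<alpha> j * info_term Q (V j) x y)"
    by (rule sum.swap)
  also have "\<dots> = (\<Sum>j\<in>A. \<alpha> j * mutual_info Q (V j))"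
    by (simp add: mutual_info_info_term sum_distrib_left)
  finally show ?thesis .
qed

text \<open>A crude concavity bound: if \<open>Q \<ge> (1-\<epsilon>) Q\<^sub>0\<close> pointwise then
  \<open>I(Q,W) \<ge> (1-\<epsilon>) I(Q\<^sub>0,W)\<close> (golden formula with \<open>R = QW\<close> applied to \<open>Q\<^sub>0\<close>).\<close>

lemma mutual_info_dominated_lower:
  assumes Q: "is_pmf Q" and Q0: "is_pmf Q0" and W: "is_channel W" and e: "0 \<le> \<epsilon>" "\<epsilon> < 1"
    and ge: "\<And>x. Q x \<ge> (1 - \<epsilon>) * Q0 x"
  shows "mutual_info Q W \<ge> (1 - \<epsilon>) * mutual_info Q0 W"
proof -
  define D where "D = (\<lambda>x. row_div W x (out_dist Q W))"
  have supp: "Q x > 0" if "Q0 x > 0" for x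
    using ge[of x] e that mult_pos_pos[of "1 - \<epsilon>" "Q0 x"] by linarith
  have "(1 - \<epsilon>) * mutual_info Q0 W \<le> (1 - \<epsilon>) * avg_div Q0 W (out_dist Q W)"
  proof (intro mult_left_mono mutual_info_le_avg_div[OF Q0 W])
    show "out_dist Q W y \<ge> 0" for y by (rule out_dist_nonneg[OF Q W])
    show "(\<Sum>y\<in>UNIV. out_dist Q W y) \<le> 1" using out_dist_pmf[OF Q W] by (simp add: pmf_sum)
    show "out_dist Q W y > 0" if "Q0 x * W x y > 0" for x y
      using that pmf_nonneg[OF Q0, of x] supp[of x] out_dist_pos[OF Q W, of x y]
      by (auto simp: zero_less_mult_iff)
  qed (use e in auto)
  also have "\<dots> = (\<Sum>x\<in>UNIV. (1 - \<epsilon>) * Q0 x * D x)"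
    by (simp add: avg_div_row_div pmf_nonneg[OF Q0] D_def sum_distrib_left mult_ac)
  also have "\<dots> \<le> (\<Sum>x\<in>UNIV. Q x * D x)"
  proof (intro sum_mono)
    fix x
    show "(1 - \<epsilon>) * Q0 x * D x \<le> Q x * D x"
    proof (cases "Q x > 0")
      case True
      then show ?thesis using ge[of x] row_div_out_dist_nonneg[OF Q W True]
        by (intro mult_right_mono) (auto simp: D_def)
    next
      case False
      then show ?thesis using supp[of x] pmf_nonneg[OF Q, of x] pmf_nonneg[OF Q0, of x] by force
    qed
  qed
  also have "\<dots> = mutual_info Q W" by (simp add: mutual_info_avg_div avg_div_row_div pmf_nonneg[OF Q] D_def)
  finally show ?thesis .
qed

abbreviation param_space :: "('x::finite \<Rightarrow> real) measure" where
  "param_space \<equiv> PiM (UNIV - {x0}) (\<lambda>_. lborel)"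

lemma simplex_ext_measurable[measurable]:
  "(\<lambda>q. simplex_ext q x) \<in> borel_measurable param_space"
  by (cases "x = x0") (simp_all add: simplex_ext_def)

lemma mutual_info_measurable[measurable]:
  "(\<lambda>q. mutual_info (simplex_ext q) V) \<in> borel_measurable param_space"
  unfolding mutual_info_def out_dist_def by measurable

lemma simplex_param_sets[measurable]: "simplex_param \<in> sets param_space"
  unfolding simplex_param_def by measurable

lemma simplex_ext_pmf:
  assumes "q \<in> simplex_param"
  shows "is_pmf (simplex_ext q :: 'x::finite \<Rightarrow> real)"
proof -
  have q: "\<forall>x\<in>UNIV - {x0::'x}. q x \<ge> 0" "(\<Sum>x\<in>UNIV - {x0::'x}. q x) \<le> 1"
    using assms by (auto simp: simplex_param_def)
  have "(\<Sum>x\<in>UNIV. simplex_ext q x) = simplex_ext q x0 + (\<Sum>x\<in>UNIV - {x0::'x}. simplex_ext q x)"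
    by (simp add: sum.remove)
  also have "(\<Sum>x\<in>UNIV - {x0::'x}. simplex_ext q x) = (\<Sum>x\<in>UNIV - {x0::'x}. q x)"
    by (intro sum.cong) (auto simp: simplex_ext_def)
  finally have "(\<Sum>x\<in>UNIV. simplex_ext q x) = 1" by (simp add: simplex_ext_def)
  moreover have "simplex_ext q x \<ge> 0" for x using q by (auto simp: simplex_ext_def)
  ultimately show ?thesis by (simp add: is_pmf_def)
qed

text \<open>The proof is by
  induction on \<open>A\<close>, integrating out one coordinate at a time.\<close>

lemma shifted_simplex_insert:
  fixes x a :: "'a \<Rightarrow> real" and y t :: real
  assumes "b \<notin> A" "finite A" "x \<in> space (Pi\<^sub>M A (\<lambda>_. lborel))"
  shows "indicator ({x. (\<forall>i\<in>insert b A. a i \<le> x i) \<and> (\<Sum>i\<in>insert b A. x i - a i) \<le> t}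
      \<inter> space (Pi\<^sub>M (insert b A) (\<lambda>_. lborel))) (x(b := y)) =
    (indicator {a b..a b + t} y * indicator ({x. (\<forall>i\<in>A. a i \<le> x i) \<and> (\<Sum>i\<in>A. x i - a i) \<le> t - (y - a b)}
      \<inter> space (Pi\<^sub>M A (\<lambda>_. lborel))) x :: ennreal)"
proof -
  have sum_upd: "(\<Sum>i\<in>A. (x(b:=y)) i - a i) = (\<Sum>i\<in>A. x i - a i)"
    using assms by (intro sum.cong) auto
  have "(\<forall>i\<in>A. a i \<le> x i) \<Longrightarrow> (\<Sum>i\<in>A. x i - a i) \<ge> 0" by (auto intro: sum_nonneg)
  moreover have "(\<forall>i\<in>A. a i \<le> (x(b:=y)) i) \<longleftrightarrow> (\<forall>i\<in>A. a i \<le> x i)" using assms by auto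
  moreover have "x(b := y) \<in> space (Pi\<^sub>M (insert b A) (\<lambda>_. lborel))"
    using assms(3) by (auto simp: space_PiM PiE_def extensional_def)
  ultimately show ?thesis
    using assms sum_upd unfolding indicator_def by (auto simp: sum.insert_remove)
qed

lemma nn_integral_shifted_power:
  fixes a t :: real
  assumes "t \<ge> 0"
  shows "(\<integral>\<^sup>+ y. indicator {a..a + t} y * ennreal ((t - (y - a)) ^ k) \<partial>lborel)
       = ennreal (t ^ Suc k / Suc k)"
proof -
  have "((\<lambda>x. - ((t - (x - a)) ^ Suc k / Suc k)) has_real_derivative (t - (x - a)) ^ k) (at x)" for x
    by (rule derivative_eq_intros refl | simp)+
  then have "(\<integral>\<^sup>+y\<in>{a..a + t}. ennreal ((t - (y - a)) ^ k) \<partial>lborel) =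
      ennreal (- ((t - (a + t - a)) ^ Suc k / Suc k) - (- ((t - (a - a)) ^ Suc k / Suc k)))"
    using assms by (intro nn_integral_FTC_Icc) auto
  then show ?thesis by (simp add: mult.commute)
qed

lemma emeasure_shifted_simplex:
  fixes t :: real
  assumes "finite (A :: 'a set)" "t \<ge> 0"
  shows "emeasure (Pi\<^sub>M A (\<lambda>_. lborel))
      ({x. (\<forall>i\<in>A. a i \<le> x i) \<and> (\<Sum>i\<in>A. x i - a i) \<le> t} \<inter> space (Pi\<^sub>M A (\<lambda>_. lborel)))
      = t ^ card A / fact (card A)"
  using assms
proof (induction arbitrary: t rule: finite_induct)
  case (empty t)
  thus ?case by (simp add: PiM_empty)
next
  case (insert b A t)
  define S where "S = (\<lambda>A t. {x. (\<forall>i\<in>A. a i \<le> x i) \<and> (\<Sum>i\<in>A. x i - a i) \<le> t}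
                                \<inter> space (Pi\<^sub>M A (\<lambda>_. lborel)))"
  let ?M = "\<lambda>A. Pi\<^sub>M A (\<lambda>_. lborel)"
  have S_sets [measurable]: "S A' t' \<in> sets (?M A')" if "finite A'" for A' t'
  proof -
    have "S A' t' = {x \<in> space (?M A'). (\<forall>i\<in>A'. a i \<le> x i) \<and> (\<Sum>i\<in>A'. x i - a i) \<le> t'}"
      by (auto simp: S_def)
    also have "\<dots> \<in> sets (?M A')" using that by measurable
    finally show ?thesis .
  qed
  interpret product_sigma_finite "\<lambda>_. lborel" by standard
  have "emeasure (?M (insert b A)) (S (insert b A) t)
      = (\<integral>\<^sup>+ x. indicator (S (insert b A) t) x \<partial>?M (insert b A))"
    using insert.hyps by (subst nn_integral_indicator) auto
  also have "\<dots> = (\<integral>\<^sup>+ y. \<integral>\<^sup>+ x. indicator (S (insert b A) t) (x(b := y)) \<partial>?M A \<partial>lborel)"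
    using insert.hyps by (intro product_nn_integral_insert_rev) auto
  also have "\<dots> = (\<integral>\<^sup>+ y. \<integral>\<^sup>+ x. indicator {a b..a b + t} y * indicator (S A (t - (y - a b))) x
                    \<partial>?M A \<partial>lborel)"
    using insert.hyps unfolding S_def by (intro nn_integral_cong shifted_simplex_insert) auto
  also have "\<dots> = (\<integral>\<^sup>+ y. indicator {a b..a b + t} y * emeasure (?M A) (S A (t - (y - a b))) \<partial>lborel)"
    using insert.hyps by (intro nn_integral_cong) (simp add: nn_integral_cmult)
  also have "\<dots> = (\<integral>\<^sup>+ y. indicator {a b..a b + t} y * ennreal ((t - (y - a b)) ^ card A)
                     \<partial>lborel) / ennreal (fact (card A))"
    using insert.IH by (subst nn_integral_divide[symmetric])
      (auto intro!: nn_integral_cong simp: indicator_def divide_ennreal S_def)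
  also have "\<dots> = ennreal (t ^ card (insert b A) / fact (card (insert b A)))"
    using insert.hyps insert.prems
    by (simp add: nn_integral_shifted_power divide_ennreal)
  finally show ?case by (simp add: S_def)
qed

lemma emeasure_simplex_param:
  "emeasure param_space (simplex_param :: ('x::finite \<Rightarrow> real) set)
     = ennreal (1 / fact (CARD('x) - 1))"
proof -
  have "(simplex_param :: ('x \<Rightarrow> real) set) =
      {x. (\<forall>i\<in>UNIV - {x0::'x}. 0 \<le> x i) \<and> (\<Sum>i\<in>UNIV - {x0}. x i - 0) \<le> 1} \<inter> space param_space"
    by (auto simp: simplex_param_def)
  then show ?thesis
    using emeasure_shifted_simplex[of "UNIV - {x0::'x}" 1 "\<lambda>_. 0"]
    by (simp add: card_Diff_singleton)
qed

definition simplex_regular :: "(('x::finite \<Rightarrow> real) \<Rightarrow> real) \<Rightarrow> bool" where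
  "simplex_regular f \<longleftrightarrow> (\<lambda>q. f (simplex_ext q)) \<in> borel_measurable param_space
     \<and> (\<exists>B. \<forall>Q. is_pmf Q \<longrightarrow> \<bar>f Q\<bar> \<le> B)"

lemma simplex_regular_integrable:
  fixes f :: "('x::finite \<Rightarrow> real) \<Rightarrow> real"
  assumes "simplex_regular f"
  shows "set_integrable param_space simplex_param (\<lambda>q. f (simplex_ext q))"
proof -
  obtain B where B: "\<And>Q. is_pmf Q \<Longrightarrow> \<bar>f Q\<bar> \<le> B" and meas: "(\<lambda>q. f (simplex_ext q)) \<in> borel_measurable param_space"
    using assms by (auto simp: simplex_regular_def)
  show ?thesis
    unfolding set_integrable_def
  proof (rule integrableI_bounded_set[where A=simplex_param and B=B])
    show "emeasure param_space (simplex_param :: ('x \<Rightarrow> real) set) < \<infinity>"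
      by (simp add: emeasure_simplex_param)
  qed (use meas B simplex_ext_pmf in \<open>auto simp: indicator_def\<close>)
qed

lemma simplex_regular_const: "simplex_regular (\<lambda>_. c)"
  by (auto simp: simplex_regular_def)

lemma simplex_regular_coord: "simplex_regular (\<lambda>Q. Q x)"
  unfolding simplex_regular_def
  by (intro conjI exI[of _ 1] allI impI simplex_ext_measurable)
    (simp add: pmf_nonneg pmf_le1)

lemma simplex_regular_mutual_info:
  assumes "is_channel V"
  shows "simplex_regular (\<lambda>Q. mutual_info Q V)"
  unfolding simplex_regular_def
  using mutual_info_nonneg[OF _ assms] mutual_info_le_log_card_in[OF _ assms]
  by (intro conjI exI[of _ "log 2 (real CARD('a))"] allI impI mutual_info_measurable) auto

lemma simplex_regular_add:
  assumes "simplex_regular f" "simplex_regular g"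
  shows "simplex_regular (\<lambda>Q. f Q + g Q)"
proof -
  obtain Bf Bg where "\<And>Q. is_pmf Q \<Longrightarrow> \<bar>f Q\<bar> \<le> Bf" "\<And>Q. is_pmf Q \<Longrightarrow> \<bar>g Q\<bar> \<le> Bg"
    using assms by (auto simp: simplex_regular_def)
  then have "\<forall>Q. is_pmf Q \<longrightarrow> \<bar>f Q + g Q\<bar> \<le> Bf + Bg"
    by (smt (verit))
  then show ?thesis using assms unfolding simplex_regular_def by auto
qed

lemma simplex_regular_mult:
  assumes "simplex_regular f" "simplex_regular g"
  shows "simplex_regular (\<lambda>Q. f Q * g Q)"
proof -
  obtain Bf Bg where "\<And>Q. is_pmf Q \<Longrightarrow> \<bar>f Q\<bar> \<le> Bf" "\<And>Q. is_pmf Q \<Longrightarrow> \<bar>g Q\<bar> \<le> Bg"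
    using assms by (auto simp: simplex_regular_def)
  then have "\<forall>Q. is_pmf Q \<longrightarrow> \<bar>f Q * g Q\<bar> \<le> Bf * Bg"
    by (auto simp: abs_mult intro!: mult_mono order.trans[OF abs_ge_zero])
  then show ?thesis using assms unfolding simplex_regular_def by auto
qed

lemma simplex_regular_sum:
  assumes "finite A" "\<And>i. i \<in> A \<Longrightarrow> simplex_regular (f i)"
  shows "simplex_regular (\<lambda>Q. \<Sum>i\<in>A. f i Q)"
  using assms by (induction rule: finite_induct)
    (auto intro: simplex_regular_add simplex_regular_const)

lemma simplex_regular_exp:
  assumes "simplex_regular f"
  shows "simplex_regular (\<lambda>Q. exp (f Q))"
proof -
  obtain B where "\<And>Q. is_pmf Q \<Longrightarrow> \<bar>f Q\<bar> \<le> B"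
    using assms by (auto simp: simplex_regular_def)
  then have "\<forall>Q. is_pmf Q \<longrightarrow> \<bar>exp (f Q)\<bar> \<le> exp B" by (auto dest!: abs_le_D1)
  then show ?thesis using assms unfolding simplex_regular_def by auto
qed

lemma simplex_integral_mono:
  assumes "simplex_regular f" "simplex_regular g" "\<And>Q. is_pmf Q \<Longrightarrow> f Q \<le> g Q"
  shows "simplex_integral f \<le> simplex_integral g"
  unfolding simplex_integral_def
  by (rule set_integral_mono) (use assms simplex_regular_integrable simplex_ext_pmf in auto)

lemma simplex_integral_cong:
  assumes "\<And>Q. is_pmf Q \<Longrightarrow> f Q = g Q"
  shows "simplex_integral f = simplex_integral g"
  unfolding simplex_integral_def
  by (rule set_lebesgue_integral_cong) (use assms simplex_ext_pmf in auto)

lemma simplex_integral_add: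
  assumes "simplex_regular f" "simplex_regular g"
  shows "simplex_integral (\<lambda>Q. f Q + g Q) = simplex_integral f + simplex_integral g"
  unfolding simplex_integral_def
  using assms by (simp add: set_integral_add simplex_regular_integrable)

lemma simplex_integral_sum:
  assumes "finite A" "\<And>i. i \<in> A \<Longrightarrow> simplex_regular (f i)"
  shows "simplex_integral (\<lambda>Q. \<Sum>i\<in>A. f i Q) = (\<Sum>i\<in>A. simplex_integral (f i))"
  using assms
proof (induction rule: finite_induct)
  case empty
  then show ?case by (simp add: simplex_integral_def)
next
  case (insert i A)
  then show ?case
    by (simp add: simplex_integral_add simplex_regular_sum)
qed

lemma simplex_integral_cmult: "simplex_integral (\<lambda>Q. c * f Q) = c * simplex_integral f"
  by (simp add: simplex_integral_def)

lemma simplex_integral_const: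
  "simplex_integral (\<lambda>_::'x::finite \<Rightarrow> real. c) = c / fact (CARD('x) - 1)"
  unfolding simplex_integral_def
  by (subst set_integral_const) (auto simp: emeasure_simplex_param measure_def)

lemma simplex_integral_exp_pos:
  assumes "simplex_regular f"
  shows "simplex_integral (\<lambda>Q::'x::finite \<Rightarrow> real. exp (f Q)) > 0"
proof -
  obtain B where B: "\<And>Q. is_pmf Q \<Longrightarrow> \<bar>f Q\<bar> \<le> B"
    using assms by (auto simp: simplex_regular_def)
  have "- B \<le> f Q" if "is_pmf Q" for Q using B[OF that] by linarith
  then have "simplex_integral (\<lambda>_::'x \<Rightarrow> real. exp (- B)) \<le> simplex_integral (\<lambda>Q. exp (f Q))"
    by (intro simplex_integral_mono simplex_regular_const simplex_regular_exp assms) auto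
  moreover have "simplex_integral (\<lambda>_::'x \<Rightarrow> real. exp (- B)) > 0"
    by (simp add: simplex_integral_const)
  ultimately show ?thesis by linarith
qed

lemma sum_over_blocks:
  fixes f :: "nat \<Rightarrow> real"
  shows "(\<Sum>t\<in>{1..(\<Sum>j\<in>{1..<Suc k}. m j)}. f t) = (\<Sum>i\<in>{1..k}. \<Sum>t\<in>block m i. f t)"
proof (induction k)
  case 0
  then show ?case by simp
next
  case (Suc k)
  have "(\<Sum>j\<in>{1..<Suc (Suc k)}. m j) = (\<Sum>j\<in>{1..<Suc k}. m j) + m (Suc k)" by simp
  then have "(\<Sum>t\<in>{1..(\<Sum>j\<in>{1..<Suc (Suc k)}. m j)}. f t) =
      (\<Sum>t\<in>{1..(\<Sum>j\<in>{1..<Suc k}. m j)}. f t) + (\<Sum>t\<in>block m (Suc k). f t)"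
    by (simp only: sum.ub_add_nat[of 1] block_def)
  then show ?case using Suc by simp
qed

lemma block_subset:
  assumes "i \<in> {1..k}"
  shows "block m i \<subseteq> {1..(\<Sum>j\<in>{1..<Suc k}. m j)}"
proof -
  have "(\<Sum>j\<in>{1..<i}. m j) + m i = (\<Sum>j\<in>{1..<Suc i}. m j)" using assms by simp
  also have "\<dots> \<le> (\<Sum>j\<in>{1..<Suc k}. m j)" using assms by (intro sum_mono2) auto
  finally show ?thesis by (auto simp: block_def)
qed

lemma block_avg_channel:
  assumes "\<forall>t\<in>{1..n}. is_channel (W t)" "block m i \<subseteq> {1..n}" "m i > 0"
  shows "is_channel (block_avg W m i)"
proof -
  have "is_pmf (block_avg W m i x)" for x
  proof -
    have "(\<Sum>y\<in>UNIV. block_avg W m i x y) = (1 / real (m i)) * (\<Sum>t\<in>block m i. \<Sum>y\<in>UNIV. W t x y)"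
      unfolding block_avg_def sum_distrib_left[symmetric] by (subst sum.swap) simp
    also have "\<dots> = (1 / real (m i)) * (\<Sum>t\<in>block m i. 1)"
      using assms by (intro arg_cong[where f="\<lambda>z. _ * z"] sum.cong refl)
        (auto simp: is_channel_def is_pmf_def)
    also have "\<dots> = 1" using assms(3) by (simp add: block_def)
    moreover have "block_avg W m i x y \<ge> 0" for y
      unfolding block_avg_def using assms
      by (intro mult_nonneg_nonneg sum_nonneg) (auto simp: is_channel_def is_pmf_def)
    ultimately show ?thesis by (simp add: is_pmf_def)
  qed
  then show ?thesis by (simp add: is_channel_def)
qed

lemma total_avg_channel:
  assumes "\<forall>t\<in>{1..n}. is_channel (W t)" "n > 0"
  shows "is_channel (total_avg W n)"
proof -
  have "total_avg W n = block_avg W (\<lambda>_. n) 1"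
    by (simp add: total_avg_def block_avg_def block_def)
  then show ?thesis using block_avg_channel[OF assms(1)] assms(2) by (simp add: block_def)
qed

locale block_partition =
  fixes W :: "nat \<Rightarrow> 'x::finite \<Rightarrow> 'y::finite \<Rightarrow> real" and m :: "nat \<Rightarrow> nat" and n B :: nat
  assumes chan: "\<forall>t\<in>{1..n}. is_channel (W t)"
    and m_pos: "\<forall>i\<in>{1..B+1}. m i > 0"
    and m_sum: "(\<Sum>i\<in>{1..B+1}. m i) = n"
begin

lemma n_pos: "n > 0"
proof -
  have "m 1 \<le> (\<Sum>i\<in>{1..B+1}. m i)" by (rule member_le_sum) auto
  moreover have "m 1 > 0" using m_pos by auto
  ultimately show ?thesis using m_sum by linarith
qed

lemma block_channel: "j \<in> {1..B+1} \<Longrightarrow> is_channel (block_avg W m j)"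
  using block_avg_channel[OF chan] block_subset[of j "B+1" m] m_sum m_pos
  by (auto simp: atLeastLessThanSuc_atLeastAtMost)

lemma total_avg_mixture:
  "total_avg W n = (\<lambda>x y. \<Sum>j\<in>{1..B+1}. (real (m j) / real n) * block_avg W m j x y)"
proof (intro ext)
  fix x y
  have "total_avg W n x y = (1 / real n) * (\<Sum>j\<in>{1..B+1}. \<Sum>t\<in>block m j. W t x y)"
    using sum_over_blocks[of "\<lambda>t. W t x y" m "B+1"] m_sum
    by (simp add: total_avg_def atLeastLessThanSuc_atLeastAtMost)
  also have "\<dots> = (\<Sum>j\<in>{1..B+1}. (1 / real n) * (\<Sum>t\<in>block m j. W t x y))"
    by (rule sum_distrib_left)
  also have "\<dots> = (\<Sum>j\<in>{1..B+1}. (real (m j) / real n) * block_avg W m j x y)"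
  proof (intro sum.cong refl)
    fix j assume "j \<in> {1..B+1}"
    then have "real (m j) > 0" using m_pos by auto
    then show "1 / real n * (\<Sum>t\<in>block m j. W t x y) = real (m j) / real n * block_avg W m j x y"
      unfolding block_avg_def by simp
  qed
  finally show "total_avg W n x y = (\<Sum>j\<in>{1..B+1}. (real (m j) / real n) * block_avg W m j x y)" .
qed

end

lemma uniform_mixture_pmf:
  fixes P :: "'x::finite \<Rightarrow> real"
  assumes P: "is_pmf P" and lam: "0 \<le> lam" "lam \<le> 1"
  shows "is_pmf (\<lambda>x. (1 - lam) * P x + lam * unif x)"
proof -
  have U: "is_pmf (unif :: 'x \<Rightarrow> real)" by (rule unif_pmf)
  have "(\<Sum>x\<in>UNIV. (1 - lam) * P x + lam * unif x) = (1 - lam) * (\<Sum>x\<in>UNIV. P x) + lam * (\<Sum>x\<in>UNIV. unif (x::'x))"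
    by (simp add: sum.distrib sum_distrib_left)
  moreover have "(1 - lam) * P x + lam * unif x \<ge> 0" for x
    using lam pmf_nonneg[OF P, of x] pmf_nonneg[OF U, of x] by simp
  ultimately show ?thesis using P U by (simp add: is_pmf_def pmf_sum)
qed

lemma uniform_mixture_lower:
  fixes P :: "'x::finite \<Rightarrow> real"
  assumes "is_pmf P" "0 \<le> lam" "lam \<le> 1"
  shows "(1 - lam) * P x + lam * unif x \<ge> lam / real CARD('x)"
  using assms pmf_nonneg[of P x] by (simp add: unif_def)

definition weighted_mean :: "(('x::finite \<Rightarrow> real) \<Rightarrow> real) \<Rightarrow> 'x \<Rightarrow> real" where
  "weighted_mean \<Phi> x =
     simplex_integral (\<lambda>Q. exp (\<Phi> Q) * Q x) / simplex_integral (\<lambda>Q. exp (\<Phi> Q))"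

lemma Qhat_weighted_mean:
  "Qhat lam \<eta> W m i = (\<lambda>x. (1 - lam) * weighted_mean (potential \<eta> W m i) x + lam * unif x)"
  by (simp add: Qhat_def weighted_mean_def)

lemma weighted_mean_pmf:
  fixes \<Phi> :: "('x::finite \<Rightarrow> real) \<Rightarrow> real"
  assumes \<Phi>: "simplex_regular \<Phi>"
  shows "is_pmf (weighted_mean \<Phi>)"
proof -
  define Z where "Z = simplex_integral (\<lambda>Q. exp (\<Phi> Q))"
  have Z: "Z > 0" unfolding Z_def by (rule simplex_integral_exp_pos[OF \<Phi>])
  have reg: "simplex_regular (\<lambda>Q. exp (\<Phi> Q) * Q x)" for x
    by (intro simplex_regular_mult simplex_regular_exp simplex_regular_coord \<Phi>)
  have "simplex_integral (\<lambda>_::'x \<Rightarrow> real. 0) \<le> simplex_integral (\<lambda>Q. exp (\<Phi> Q) * Q x)" for x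
    by (rule simplex_integral_mono[OF simplex_regular_const reg]) (simp add: pmf_nonneg)
  then have nonneg: "weighted_mean \<Phi> x \<ge> 0" for x
    using Z by (simp add: weighted_mean_def Z_def simplex_integral_const)
  have "(\<Sum>x\<in>UNIV. simplex_integral (\<lambda>Q. exp (\<Phi> Q) * Q x))
      = simplex_integral (\<lambda>Q. \<Sum>x\<in>UNIV. exp (\<Phi> Q) * Q x)"
    by (rule simplex_integral_sum[symmetric]) (auto intro: reg)
  also have "\<dots> = Z"
    unfolding Z_def by (rule simplex_integral_cong) (simp add: sum_distrib_left[symmetric] pmf_sum)
  finally have "(\<Sum>x\<in>UNIV. weighted_mean \<Phi> x) = 1"
    using Z by (simp add: weighted_mean_def Z_def[symmetric] sum_divide_distrib[symmetric])
  with nonneg show ?thesis by (simp add: is_pmf_def)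
qed

lemma mutual_info_le_avg_div_full_support:
  assumes Qh: "is_pmf Qh" and V: "is_channel V" and pos: "\<And>x. Qh x > 0" and Q: "is_pmf Q"
  shows "mutual_info Q V \<le> avg_div Q V (out_dist Qh V)"
proof (rule mutual_info_le_avg_div[OF Q V])
  show "out_dist Qh V y \<ge> 0" for y by (rule out_dist_nonneg[OF Qh V])
  show "(\<Sum>y\<in>UNIV. out_dist Qh V y) \<le> 1" using out_dist_pmf[OF Qh V] by (simp add: pmf_sum)
  show "out_dist Qh V y > 0" if "Q x * V x y > 0" for x y
    using that pmf_nonneg[OF Q, of x] out_dist_pos[OF Qh V pos, of x y]
    by (auto simp: zero_less_mult_iff)
qed

lemma avg_div_le_full_support:
  assumes Qh: "is_pmf Qh" and V: "is_channel V" and \<delta>: "\<delta> > 0" "\<And>x. Qh x \<ge> \<delta>"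
    and Q: "is_pmf Q"
  shows "avg_div Q V (out_dist Qh V) \<le> mutual_info Qh V / \<delta>"
proof -
  define D where "D = (\<lambda>x. row_div V x (out_dist Qh V))"
  have D: "D x \<ge> 0" for x
    unfolding D_def using \<delta>(2)[of x] \<delta>(1) by (intro row_div_out_dist_nonneg[OF Qh V]) auto
  have "avg_div Q V (out_dist Qh V) = (\<Sum>x\<in>UNIV. Q x * D x)"
    by (simp add: avg_div_row_div pmf_nonneg[OF Q] D_def)
  also have "\<dots> \<le> (\<Sum>x\<in>UNIV. (Qh x / \<delta>) * D x)"
  proof (intro sum_mono mult_right_mono D)
    fix x
    have "Q x \<le> 1" by (rule pmf_le1[OF Q])
    also have "1 \<le> Qh x / \<delta>" using \<delta>(1) \<delta>(2)[of x] by simp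
    finally show "Q x \<le> Qh x / \<delta>" .
  qed
  also have "\<dots> = mutual_info Qh V / \<delta>"
    by (simp add: mutual_info_avg_div avg_div_row_div pmf_nonneg[OF Qh] D_def sum_divide_distrib)
  finally show ?thesis .
qed

lemma exp_le_linear:
  fixes y lam :: real
  assumes "0 \<le> y" "y \<le> lam" "lam \<le> 1"
  shows "exp y \<le> 1 + (1 + lam) * y"
proof -
  have "exp y \<le> 1 + y + y^2" using assms by (intro exp_bound) auto
  also have "y^2 \<le> lam * y" using assms by (simp add: power2_eq_square mult_right_mono)
  finally show ?thesis by (simp add: algebra_simps)
qed

text \<open>Control of one increment of the potential by the golden formula at a reference law
  \<open>Qh \<ge> \<lambda>/|X|\<close>: if \<open>a I(Qh,V) \<le> c\<close> and \<open>|X| c \<le> \<lambda>\<^sup>2\<close>, the exponent \<open>a I(Q,V)\<close> is at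
  most \<open>\<lambda>\<close>, so it can be linearised against the divergences \<open>D(V(\<cdot>|x) \<parallel> Qh V)\<close>.\<close>

lemma exp_increment_bound:
  fixes Qh :: "'x::finite \<Rightarrow> real" and V :: "'x \<Rightarrow> 'y::finite \<Rightarrow> real"
  assumes Qh: "is_pmf Qh" and V: "is_channel V" and lam: "0 < lam" "lam \<le> 1"
    and Qh_low: "\<And>x. Qh x \<ge> lam / real CARD('x)" and a: "a \<ge> 0"
    and small: "a * mutual_info Qh V \<le> c" and par: "real CARD('x) * c \<le> lam * lam"
    and Q: "is_pmf Q"
  shows "exp (a * mutual_info Q V) \<le> 1 + (1 + lam) * (a * avg_div Q V (out_dist Qh V))"
proof -
  define N where "N = real CARD('x)"
  have N: "N \<ge> 1" by (simp add: N_def Suc_le_eq card_gt_0_iff)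
  have low_pos: "lam / N > 0" using lam N by simp
  have Qh_low': "\<And>x. Qh x \<ge> lam / N" using Qh_low by (simp add: N_def)
  define y where "y = a * mutual_info Q V"
  have y_le: "y \<le> a * avg_div Q V (out_dist Qh V)"
    unfolding y_def using a low_pos Qh_low'
    by (intro mult_left_mono mutual_info_le_avg_div_full_support[OF Qh V _ Q])
      (auto intro: less_le_trans)
  also have "\<dots> \<le> a * (mutual_info Qh V / (lam / N))"
    using a by (intro mult_left_mono avg_div_le_full_support[OF Qh V low_pos Qh_low' Q])
  also have "\<dots> \<le> c * N / lam" using small lam N by (simp add: field_simps)
  also have "\<dots> \<le> lam" using par lam by (simp add: N_def field_simps)
  finally have "y \<le> lam" .
  moreover have "0 \<le> y" unfolding y_def using a mutual_info_nonneg[OF Q V] by simp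
  ultimately have "exp y \<le> 1 + (1 + lam) * y" using lam by (intro exp_le_linear) auto
  also have "\<dots> \<le> 1 + (1 + lam) * (a * avg_div Q V (out_dist Qh V))"
    using y_le lam by (intro add_left_mono mult_left_mono) auto
  finally show ?thesis by (simp add: y_def)
qed

text \<open>If the mixed strategy built from the potential \<open>\<Phi>\<close>
  has small weighted information \<open>a I(Qh,V) \<le> c\<close> and \<open>|X| c \<le> \<lambda>\<^sup>2\<close>, then adding
  \<open>a I(\<cdot>,V)\<close> to the potential multiplies the partition function by at most
  \<open>1 + (1 + \<lambda>) c / (1 - \<lambda>)\<close>: integrating the linearised bound turns the average of \<open>Q\<close>
  into the weighted mean \<open>P\<close>, and \<open>(1 - \<lambda>) P \<le> Qh\<close>.\<close>

lemma exp_weights_step: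
  fixes \<Phi> :: "('x::finite \<Rightarrow> real) \<Rightarrow> real" and V :: "'x \<Rightarrow> 'y::finite \<Rightarrow> real"
  assumes \<Phi>: "simplex_regular \<Phi>" and V: "is_channel V" and a: "a \<ge> 0"
    and lam: "0 < lam" "lam < 1"
    and small: "a * mutual_info (\<lambda>x. (1 - lam) * weighted_mean \<Phi> x + lam * unif x) V \<le> c"
    and par: "real CARD('x) * c \<le> lam * lam"
  shows "simplex_integral (\<lambda>Q. exp (\<Phi> Q + a * mutual_info Q V))
       \<le> simplex_integral (\<lambda>Q. exp (\<Phi> Q)) * (1 + (1 + lam) * c / (1 - lam))"
proof -
  define P where "P = weighted_mean \<Phi>"
  define Qh where "Qh = (\<lambda>x. (1 - lam) * P x + lam * unif x)"
  define D where "D = (\<lambda>x. row_div V x (out_dist Qh V))"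
  define Z where "Z = simplex_integral (\<lambda>Q. exp (\<Phi> Q))"
  have Z: "Z > 0" unfolding Z_def by (rule simplex_integral_exp_pos[OF \<Phi>])
  have P: "is_pmf P" unfolding P_def by (rule weighted_mean_pmf[OF \<Phi>])
  have Qh: "is_pmf Qh" unfolding Qh_def using P lam by (intro uniform_mixture_pmf) auto
  have Qh_low: "Qh x \<ge> lam / real CARD('x)" for x
    unfolding Qh_def using P lam by (intro uniform_mixture_lower) auto
  have D: "D x \<ge> 0" for x
    unfolding D_def using Qh_low[of x] lam
    by (intro row_div_out_dist_nonneg[OF Qh V]) (auto intro: less_le_trans[rotated])
  have aI_Qh: "a * mutual_info Qh V \<le> c" using small by (simp add: Qh_def P_def)
  have pointwise: "exp (\<Phi> Q + a * mutual_info Q V)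
      \<le> exp (\<Phi> Q) + (1 + lam) * a * (\<Sum>x\<in>UNIV. D x * (exp (\<Phi> Q) * Q x))" if Q: "is_pmf Q" for Q
  proof -
    have "exp (a * mutual_info Q V) \<le> 1 + (1 + lam) * (a * (\<Sum>x\<in>UNIV. Q x * D x))"
      using exp_increment_bound[OF Qh V _ _ Qh_low a aI_Qh par Q] lam
      by (simp add: avg_div_row_div pmf_nonneg[OF Q] D_def)
    then have "exp (\<Phi> Q) * exp (a * mutual_info Q V)
        \<le> exp (\<Phi> Q) * (1 + (1 + lam) * (a * (\<Sum>x\<in>UNIV. Q x * D x)))"
      by simp
    then show ?thesis by (simp add: exp_add algebra_simps sum_distrib_left)
  qed
  have reg_weight: "simplex_regular (\<lambda>Q. exp (\<Phi> Q) * Q x)" for x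
    by (intro simplex_regular_mult simplex_regular_exp simplex_regular_coord \<Phi>)
  have reg_D: "simplex_regular (\<lambda>Q. D x * (exp (\<Phi> Q) * Q x))" for x
    by (intro simplex_regular_mult simplex_regular_const reg_weight)
  have reg_sum: "simplex_regular (\<lambda>Q. (1 + lam) * a * (\<Sum>x\<in>UNIV. D x * (exp (\<Phi> Q) * Q x)))"
    by (intro simplex_regular_mult simplex_regular_const simplex_regular_sum reg_D) auto
  have mean: "simplex_integral (\<lambda>Q. exp (\<Phi> Q) * Q x) = Z * P x" for x
    using Z by (simp add: P_def weighted_mean_def Z_def)
  have I_Qh: "mutual_info Qh V = (\<Sum>x\<in>UNIV. Qh x * D x)"
    by (simp add: mutual_info_avg_div avg_div_row_div pmf_nonneg[OF Qh] D_def)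
  have mixture: "(\<Sum>x\<in>UNIV. P x * D x) \<le> mutual_info Qh V / (1 - lam)"
    unfolding I_Qh sum_divide_distrib
  proof (intro sum_mono)
    fix x
    have "P x \<le> Qh x / (1 - lam)"
      using lam pmf_nonneg[OF unif_pmf, of x] by (simp add: Qh_def field_simps)
    then show "P x * D x \<le> Qh x * D x / (1 - lam)"
      using D[of x] by (metis mult_right_mono times_divide_eq_left)
  qed
  have "simplex_integral (\<lambda>Q. exp (\<Phi> Q + a * mutual_info Q V))
      \<le> simplex_integral (\<lambda>Q. exp (\<Phi> Q) + (1 + lam) * a * (\<Sum>x\<in>UNIV. D x * (exp (\<Phi> Q) * Q x)))"
    by (intro simplex_integral_mono pointwise simplex_regular_add simplex_regular_exp
        simplex_regular_mult simplex_regular_const simplex_regular_mutual_info \<Phi> V reg_sum)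
  also have "\<dots> = Z + (1 + lam) * a * (\<Sum>x\<in>UNIV. D x * (Z * P x))"
    by (simp add: simplex_integral_add simplex_regular_exp \<Phi> reg_sum simplex_integral_cmult
        simplex_integral_sum reg_D reg_weight mean Z_def)
  also have "\<dots> = Z + (1 + lam) * a * (Z * (\<Sum>x\<in>UNIV. P x * D x))"
    by (simp add: sum_distrib_left mult_ac)
  also have "\<dots> \<le> Z + (1 + lam) * Z * ((a * mutual_info Qh V) / (1 - lam))"
    using mult_left_mono[OF mixture, of "(1 + lam) * a * Z"] lam a Z by (simp add: mult_ac)
  also have "\<dots> \<le> Z + (1 + lam) * Z * (c / (1 - lam))"
    using lam aI_Qh Z by (intro add_left_mono mult_left_mono divide_right_mono) auto
  finally show ?thesis using lam by (simp add: Z_def add_divide_distrib algebra_simps)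
qed

text \<open>The distributions dominating \<open>(1 - \<epsilon>) Q0\<close>, in parameter coordinates.  They form a
  translate of the standard simplex scaled by \<open>\<epsilon>\<close>, so their volume is
  \<open>\<epsilon> ^ (|X| - 1) / (|X| - 1)!\<close>; this gives the lower bound on the partition function.\<close>

definition dominating_param :: "('x::finite \<Rightarrow> real) \<Rightarrow> real \<Rightarrow> ('x \<Rightarrow> real) set" where
  "dominating_param Q0 \<epsilon> =
     {q. (\<forall>i\<in>UNIV - {x0}. (1 - \<epsilon>) * Q0 i \<le> q i) \<and> (\<Sum>i\<in>UNIV - {x0}. q i - (1 - \<epsilon>) * Q0 i) \<le> \<epsilon>}
     \<inter> space param_space"

lemma dominating_param_sets[measurable]: "dominating_param Q0 \<epsilon> \<in> sets param_space"
proof -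
  have "dominating_param Q0 \<epsilon> = {q \<in> space param_space. (\<forall>i\<in>UNIV - {x0}. (1 - \<epsilon>) * Q0 i \<le> q i)
      \<and> (\<Sum>i\<in>UNIV - {x0}. q i - (1 - \<epsilon>) * Q0 i) \<le> \<epsilon>}"
    by (auto simp: dominating_param_def)
  also have "\<dots> \<in> sets param_space" by measurable
  finally show ?thesis .
qed

lemma emeasure_dominating_param:
  assumes "\<epsilon> \<ge> 0"
  shows "emeasure param_space (dominating_param (Q0 :: 'x::finite \<Rightarrow> real) \<epsilon>)
       = ennreal (\<epsilon> ^ (CARD('x) - 1) / fact (CARD('x) - 1))"
  unfolding dominating_param_def using assms
  by (subst emeasure_shifted_simplex) (auto simp: card_Diff_singleton)

lemma dominating_param_dominates:
  assumes Q0: "is_pmf Q0" and e: "0 \<le> \<epsilon>" "\<epsilon> \<le> 1" and q: "q \<in> dominating_param Q0 \<epsilon>"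
  shows "q \<in> simplex_param" and "simplex_ext q x \<ge> (1 - \<epsilon>) * Q0 x"
proof -
  let ?J = "UNIV - {x0}"
  have "(\<Sum>i\<in>?J. q i) = (\<Sum>i\<in>?J. q i - (1 - \<epsilon>) * Q0 i) + (1 - \<epsilon>) * (\<Sum>i\<in>?J. Q0 i)"
    by (simp add: sum_subtractf sum_distrib_left)
  also have "(\<Sum>i\<in>?J. Q0 i) = 1 - Q0 x0"
    using pmf_sum[OF Q0] by (simp add: sum.remove[of UNIV x0] algebra_simps)
  finally have sum_le: "(\<Sum>i\<in>?J. q i) \<le> \<epsilon> + (1 - \<epsilon>) * (1 - Q0 x0)"
    using q by (simp add: dominating_param_def)
  have "q i \<ge> 0" if "i \<in> ?J" for i
  proof -
    have "(1 - \<epsilon>) * Q0 i \<le> q i" using q that by (simp add: dominating_param_def)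
    moreover have "0 \<le> (1 - \<epsilon>) * Q0 i" using e pmf_nonneg[OF Q0, of i] by simp
    ultimately show ?thesis by linarith
  qed
  moreover have "\<epsilon> + (1 - \<epsilon>) * (1 - Q0 x0) \<le> 1"
    using e pmf_nonneg[OF Q0, of x0] mult_left_le_one_le[of "Q0 x0" \<epsilon>]
    by (simp add: algebra_simps mult.commute)
  ultimately show "q \<in> simplex_param"
    using q sum_le by (auto simp: simplex_param_def dominating_param_def)
  show "simplex_ext q x \<ge> (1 - \<epsilon>) * Q0 x"
    using q sum_le by (cases "x = x0") (auto simp: dominating_param_def simplex_ext_def algebra_simps)
qed

text \<open>Lower bound on a partition function whose potential dominates \<open>c0 * I(Q,V)\<close>: on the
  dominating sub-simplex of any \<open>Q0\<close> the integrand is at least \<open>exp (c0 (1 - \<epsilon>) I(Q0,V))\<close>.\<close>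

lemma exp_weights_lower:
  fixes \<Phi> :: "('x::finite \<Rightarrow> real) \<Rightarrow> real" and V :: "'x \<Rightarrow> 'y::finite \<Rightarrow> real"
  assumes \<Phi>: "simplex_regular \<Phi>" and low: "\<And>Q. is_pmf Q \<Longrightarrow> c0 * mutual_info Q V \<le> \<Phi> Q"
    and c0: "c0 \<ge> 0" and V: "is_channel V" and Q0: "is_pmf Q0" and e: "0 < \<epsilon>" "\<epsilon> < 1"
  shows "exp (c0 * ((1 - \<epsilon>) * mutual_info Q0 V)) * (\<epsilon> ^ (CARD('x) - 1) / fact (CARD('x) - 1))
      \<le> simplex_integral (\<lambda>Q. exp (\<Phi> Q))"
proof -
  define A where "A = dominating_param Q0 \<epsilon>"
  define E where "E = exp (c0 * ((1 - \<epsilon>) * mutual_info Q0 V))"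
  have A_fin: "emeasure param_space A < \<infinity>"
    using e by (simp add: A_def emeasure_dominating_param)
  have A_sub: "A \<subseteq> simplex_param"
    using dominating_param_dominates(1)[OF Q0, of \<epsilon>] e by (auto simp: A_def)
  have on_A: "E \<le> exp (\<Phi> (simplex_ext q))" if q: "q \<in> A" for q
  proof -
    have Qq: "is_pmf (simplex_ext q)" using A_sub q by (intro simplex_ext_pmf) auto
    have "c0 * ((1 - \<epsilon>) * mutual_info Q0 V) \<le> c0 * mutual_info (simplex_ext q) V"
      using mutual_info_dominated_lower[OF Qq Q0 V _ _ dominating_param_dominates(2)[OF Q0 _ _ q[unfolded A_def]]]
        e c0 by (intro mult_left_mono) auto
    also have "\<dots> \<le> \<Phi> (simplex_ext q)" by (rule low[OF Qq])
    finally show ?thesis by (simp add: E_def)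
  qed
  have "measure param_space A * E = (LINT q|param_space. indicator A q * E)"
    using A_fin by (simp add: integral_indicator A_def)
  also have "\<dots> = (LINT q:simplex_param|param_space. indicator A q * E)"
    unfolding set_lebesgue_integral_def using A_sub
    by (intro Bochner_Integration.integral_cong) (auto simp: indicator_def)
  also have "\<dots> \<le> simplex_integral (\<lambda>Q. exp (\<Phi> Q))"
    unfolding simplex_integral_def
  proof (rule set_integral_mono)
    have "integrable param_space (\<lambda>q. indicator A q * E)"
      using A_fin by (simp add: A_def)
    then show "set_integrable param_space simplex_param (\<lambda>q. indicator A q * E)"
      unfolding set_integrable_def by (rule integrable_mult_indicator[OF simplex_param_sets])
    show "set_integrable param_space simplex_param (\<lambda>q. exp (\<Phi> (simplex_ext q)))"
      by (intro simplex_regular_integrable simplex_regular_exp \<Phi>)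
  qed (use on_A in \<open>auto simp: indicator_def E_def\<close>)
  finally show ?thesis
    using e by (simp add: E_def measure_def A_def emeasure_dominating_param mult.commute)
qed

text \<open>The potential of the theorem along the blocks of a partition: it is regular, grows by
  \<open>\<eta> m\<^sub>i I(\<cdot>, W\<^sub>i)\<close> from block to block, and after the last block dominates
  \<open>\<eta> n I(\<cdot>, W)\<close> by convexity of mutual information in the channel.\<close>

lemma potential_Suc:
  "1 \<le> i \<Longrightarrow> potential \<eta> W m (Suc i) Q
     = potential \<eta> W m i Q + \<eta> * (real (m i) * mutual_info Q (block_avg W m i))"
  by (simp add: potential_def sum.atLeastLessThan_Suc algebra_simps)

context block_partition
begin

lemma potential_regular:
  assumes "i \<le> B + 2"
  shows "simplex_regular (potential \<eta> W m i)"
  unfolding potential_def using assms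
  by (intro simplex_regular_mult simplex_regular_const simplex_regular_sum
      simplex_regular_mutual_info block_channel) auto

lemma potential_ge_total_info:
  assumes "\<eta> \<ge> 0" and Q: "is_pmf Q"
  shows "\<eta> * real n * mutual_info Q (total_avg W n) \<le> potential \<eta> W m (B + 2) Q"
proof -
  have "mutual_info Q (total_avg W n)
      \<le> (\<Sum>j\<in>{1..B+1}. (real (m j) / real n) * mutual_info Q (block_avg W m j))"
    unfolding total_avg_mixture by (rule mutual_info_convex_channel[OF Q]) (auto intro: block_channel)
  then have "real n * mutual_info Q (total_avg W n)
      \<le> (\<Sum>j\<in>{1..B+1}. real (m j) * mutual_info Q (block_avg W m j))"
    using n_pos by (simp add: sum_distrib_left field_simps)
  also have "{1..B+1} = {1..<B+2}" by auto
  finally show ?thesis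
    using assms(1) by (simp add: potential_def mult.assoc mult_left_mono)
qed

lemma partition_function_block_step:
  assumes eta: "\<eta> \<ge> 0" and lam: "0 < lam" "lam < 1" and i: "i \<in> {1..B+1}"
    and small: "real (m i) * mutual_info (Qhat lam \<eta> W m i) (block_avg W m i) \<le> K"
    and par: "real CARD('x) * (\<eta> * K) \<le> lam * lam"
  shows "simplex_integral (\<lambda>Q. exp (potential \<eta> W m (Suc i) Q))
       \<le> simplex_integral (\<lambda>Q. exp (potential \<eta> W m i Q)) * (1 + \<eta> * (1 + lam) * K / (1 - lam))"
proof -
  have "simplex_integral (\<lambda>Q. exp (potential \<eta> W m (Suc i) Q))
      = simplex_integral (\<lambda>Q. exp (potential \<eta> W m i Q + \<eta> * real (m i) * mutual_info Q (block_avg W m i)))"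
    using i by (simp add: potential_Suc mult.assoc)
  also have "\<dots> \<le> simplex_integral (\<lambda>Q. exp (potential \<eta> W m i Q)) * (1 + (1 + lam) * (\<eta> * K) / (1 - lam))"
  proof (rule exp_weights_step[OF potential_regular block_channel[OF i] _ lam _ par])
    show "\<eta> * real (m i) * mutual_info (\<lambda>x. (1 - lam) * weighted_mean (potential \<eta> W m i) x
              + lam * unif x) (block_avg W m i) \<le> \<eta> * K"
      using small eta unfolding Qhat_weighted_mean[symmetric] by (simp add: mult.assoc mult_left_mono)
  qed (use i eta in auto)
  finally show ?thesis by (simp add: mult_ac)
qed

text \<open>Upper bound on the final partition function: iterating the block step from the volume
  \<open>1 / (|X| - 1)!\<close> of the simplex, and \<open>1 + g \<le> exp g\<close>.\<close>

lemma partition_function_upper: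
  assumes eta: "\<eta> \<ge> 0" and lam: "0 < lam" "lam < 1"
    and small: "\<forall>i\<in>{1..B+1}. real (m i) * mutual_info (Qhat lam \<eta> W m i) (block_avg W m i) \<le> K"
    and par: "real CARD('x) * (\<eta> * K) \<le> lam * lam"
  shows "simplex_integral (\<lambda>Q. exp (potential \<eta> W m (B + 2) Q))
       \<le> exp (real (B + 1) * (\<eta> * (1 + lam) * K / (1 - lam))) / fact (CARD('x) - 1)"
proof -
  define Z where "Z = (\<lambda>i. simplex_integral (\<lambda>Q. exp (potential \<eta> W m i Q)))"
  define g where "g = \<eta> * (1 + lam) * K / (1 - lam)"
  have "is_pmf (Qhat lam \<eta> W m 1)"
    unfolding Qhat_weighted_mean
    by (rule uniform_mixture_pmf[OF weighted_mean_pmf[OF potential_regular]]) (use lam in auto)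
  then have "0 \<le> real (m 1) * mutual_info (Qhat lam \<eta> W m 1) (block_avg W m 1)"
    by (intro mult_nonneg_nonneg mutual_info_nonneg block_channel) auto
  then have "K \<ge> 0" using bspec[OF small, of 1] by auto
  then have g: "g \<ge> 0" using eta lam by (simp add: g_def)
  have iter: "Z (Suc k) \<le> Z 1 * (1 + g) ^ k" if "k \<le> B + 1" for k
    using that
  proof (induction k)
    case 0
    then show ?case by simp
  next
    case (Suc k)
    have "Z (Suc (Suc k)) \<le> Z (Suc k) * (1 + g)"
      unfolding Z_def g_def using Suc.prems small
      by (intro partition_function_block_step[OF eta lam _ _ par]) auto
    also have "\<dots> \<le> Z 1 * (1 + g) ^ k * (1 + g)"
      using Suc g by (intro mult_right_mono) auto
    finally show ?case by (simp add: mult_ac)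
  qed
  have growth: "(1 + g) ^ (B + 1) \<le> exp (real (B + 1) * g)"
  proof -
    have "(1 + g) ^ (B + 1) \<le> exp g ^ (B + 1)"
      using g by (intro power_mono) (auto simp: add.commute exp_ge_add_one_self)
    also have "\<dots> = exp (real (B + 1) * g)" by (rule exp_of_nat_mult[symmetric])
    finally show ?thesis .
  qed
  have Z1: "Z 1 = 1 / fact (CARD('x) - 1)"
    by (simp add: Z_def potential_def simplex_integral_const)
  have "Z (B + 2) \<le> Z 1 * (1 + g) ^ (B + 1)" using iter[of "B + 1"] by simp
  also have "\<dots> \<le> Z 1 * exp (real (B + 1) * g)"
    using growth Z1 by (intro mult_left_mono) auto
  also have "\<dots> = exp (real (B + 1) * g) / fact (CARD('x) - 1)" using Z1 by simp
  finally show ?thesis by (simp add: Z_def g_def)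
qed

text \<open>Regret inequality: comparing the two bounds on the final partition function, for any
  input distribution \<open>Q\<^sub>0\<close> and any \<open>0 < \<epsilon> < 1\<close>.\<close>

lemma regret_inequality:
  assumes eta: "\<eta> \<ge> 0" and lam: "0 < lam" "lam < 1"
    and small: "\<forall>i\<in>{1..B+1}. real (m i) * mutual_info (Qhat lam \<eta> W m i) (block_avg W m i) \<le> K"
    and par: "real CARD('x) * (\<eta> * K) \<le> lam * lam"
    and Q0: "is_pmf Q0" and e: "0 < \<epsilon>" "\<epsilon> < 1"
  shows "\<eta> * real n * ((1 - \<epsilon>) * mutual_info Q0 (total_avg W n)) + (real CARD('x) - 1) * ln \<epsilon>
       \<le> real (B + 1) * (\<eta> * (1 + lam) * K / (1 - lam))"
proof -
  define d where "d = CARD('x) - 1"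
  define X where "X = \<eta> * real n * ((1 - \<epsilon>) * mutual_info Q0 (total_avg W n))"
  define Y where "Y = real (B + 1) * (\<eta> * (1 + lam) * K / (1 - lam))"
  have "exp X * (\<epsilon> ^ d / fact d) \<le> simplex_integral (\<lambda>Q. exp (potential \<eta> W m (B + 2) Q))"
    unfolding d_def X_def
    by (rule exp_weights_lower[OF potential_regular potential_ge_total_info[OF eta] _
          total_avg_channel[OF chan n_pos] Q0 e]) (use eta in auto)
  also have "\<dots> \<le> exp Y / fact d"
    unfolding d_def Y_def by (rule partition_function_upper[OF eta lam small par])
  finally have "exp X * \<epsilon> ^ d / fact d \<le> exp Y / fact d" by simp
  then have "exp X * \<epsilon> ^ d \<le> exp Y" by (simp add: divide_le_cancel)
  moreover have "\<epsilon> ^ d = exp (real d * ln \<epsilon>)" using e by (simp add: exp_of_nat_mult)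
  ultimately have "exp (X + real d * ln \<epsilon>) \<le> exp Y" by (simp add: exp_add)
  moreover have "real d = real CARD('x) - 1" by (simp add: d_def of_nat_diff Suc_le_eq)
  ultimately show ?thesis by (simp add: X_def Y_def)
qed

end

text \<open>The rate of the theorem is the cube root of
  \<open>Imax\<^sup>2 |X|\<^sup>2 K L / n\<close> (with \<open>L = ln n\<close>), so any \<open>x \<ge> 0\<close> whose cube is below that
  quantity is below the rate.\<close>

lemma powr_one_third_cube: "x \<ge> 0 \<Longrightarrow> (x powr (1/3)) ^ 3 = (x::real)"
  by (cases "x = 0") (simp_all add: powr_power)

lemma cube_powr_one_third:
  assumes "y \<ge> 0"
  shows "(y ^ 3) powr (1/3) = (y::real)"
proof -
  have "((y ^ 3) powr (1/3)) ^ 3 = y ^ 3" using assms by (simp add: powr_one_third_cube)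
  then show ?thesis using assms by (metis power_eq_iff_eq_base zero_less_numeral powr_ge_zero)
qed

lemma rate_cube_root:
  fixes a b c e :: real
  assumes "a \<ge> 0" "b \<ge> 0" "c \<ge> 0" "e \<ge> 0"
  shows "a powr (2/3) * b powr (2/3) * c powr (1/3) * e powr (1/3) = (a\<^sup>2 * b\<^sup>2 * c * e) powr (1/3)"
proof -
  have sq: "z powr (2/3) = (z\<^sup>2) powr (1/3)" if "z \<ge> 0" for z :: real
  proof -
    have "z powr (real 2) = z\<^sup>2" using that by (rule powr_realpow') simp
    then have "z\<^sup>2 = z powr 2" by simp
    then show ?thesis by (simp add: powr_powr)
  qed
  have "a powr (2/3) = (a\<^sup>2) powr (1/3)" using assms(1) by (rule sq)
  moreover have "b powr (2/3) = (b\<^sup>2) powr (1/3)" using assms(2) by (rule sq)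
  ultimately show ?thesis using assms by (simp add: powr_mult)
qed

lemma le_rate:
  fixes x Imax N K r :: real
  assumes "0 \<le> x" "x ^ 3 \<le> Imax\<^sup>2 * N\<^sup>2 * K * r" "Imax \<ge> 0" "N \<ge> 0" "K \<ge> 0" "r \<ge> 0"
  shows "x \<le> Imax powr (2/3) * N powr (2/3) * K powr (1/3) * r powr (1/3)"
proof -
  have "x = (x ^ 3) powr (1/3)" using assms(1) by (simp add: cube_powr_one_third)
  also have "\<dots> \<le> (Imax\<^sup>2 * N\<^sup>2 * K * r) powr (1/3)"
    by (rule powr_mono2) (use assms in auto)
  also have "\<dots> = Imax powr (2/3) * N powr (2/3) * K powr (1/3) * r powr (1/3)"
    using assms by (simp add: rate_cube_root)
  finally show ?thesis .
qed

text \<open>Consequently \<open>\<lambda> Imax\<close> is below the rate whenever \<open>\<lambda>\<^sup>3 = K |X| (|X| - 1) L / (Imax n)\<close>;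
  for \<open>\<lambda> = \<lambda>* \<ge> 1\<close> this makes the theorem trivial.\<close>

lemma lam_Imax_le_rate:
  fixes Imax K N L n lam :: real
  assumes pos: "Imax > 0" "K > 0" "N \<ge> 1" "L \<ge> 0" "n > 0" "lam \<ge> 0"
    and lam3: "lam ^ 3 = K * N * (N - 1) / Imax * (L / n)"
  shows "lam * Imax \<le> Imax powr (2/3) * N powr (2/3) * K powr (1/3) * (L / n) powr (1/3)"
proof (rule le_rate)
  have "(lam * Imax) ^ 3 = K * N * (N - 1) / Imax * (L / n) * Imax ^ 3"
    by (simp only: power_mult_distrib lam3)
  also have "\<dots> = Imax\<^sup>2 * (N * (N - 1)) * K * (L / n)"
    using pos by (simp add: power2_eq_square power3_eq_cube field_simps)
  also have "\<dots> \<le> Imax\<^sup>2 * N\<^sup>2 * K * (L / n)"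
    using pos by (intro mult_right_mono mult_left_mono) (auto simp: power2_eq_square)
  finally show "(lam * Imax) ^ 3 \<le> Imax\<^sup>2 * N\<^sup>2 * K * (L / n)" .
qed (use pos in auto)

lemma tuned_parameters:
  fixes Imax K N L n lam \<eta> :: real
  assumes pos: "Imax > 0" "K > 0" "N \<ge> 2" "L > 0" "n > 0" "lam > 0"
    and lam3: "lam ^ 3 = K * N * (N - 1) / Imax * (L / n)"
    and eta: "\<eta> = sqrt ((N - 1) / (K * N * Imax) * (lam * L / n))"
  shows "\<eta> > 0" and "N * (\<eta> * K) = lam * lam" and "\<eta> * n * (lam * Imax) = (N - 1) * L"
proof -
  have arg_pos: "0 < (N - 1) / (K * N * Imax) * (lam * L / n)"
    using pos by (auto intro!: mult_pos_pos divide_pos_pos)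
  then show "\<eta> > 0" unfolding eta by simp
  have arg: "0 \<le> (N - 1) / (K * N * Imax) * (lam * L / n)" using arg_pos by simp
  then have eta_sq: "\<eta>\<^sup>2 = (N - 1) / (K * N * Imax) * (lam * L / n)"
    unfolding eta by (rule real_sqrt_pow2)
  have "\<eta> \<ge> 0" unfolding eta using arg by (rule real_sqrt_ge_zero)
  have "(N * (\<eta> * K))\<^sup>2 = N\<^sup>2 * K\<^sup>2 * \<eta>\<^sup>2" by (simp add: power_mult_distrib)
  also have "\<dots> = lam * (K * N * (N - 1) / Imax * (L / n))"
    unfolding eta_sq using pos by (simp add: field_simps power2_eq_square)
  also have "\<dots> = lam * lam ^ 3" by (simp only: lam3)
  also have "\<dots> = (lam * lam)\<^sup>2" by (simp add: power2_eq_square power3_eq_cube)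
  finally show "N * (\<eta> * K) = lam * lam"
    using pos \<open>\<eta> \<ge> 0\<close> by (subst (asm) power2_eq_iff_nonneg) auto
  have "(\<eta> * n * (lam * Imax))\<^sup>2 = \<eta>\<^sup>2 * n\<^sup>2 * lam\<^sup>2 * Imax\<^sup>2" by (simp add: power_mult_distrib)
  also have "\<dots> = (N - 1) * L * (n * Imax / (K * N)) * lam ^ 3"
    unfolding eta_sq using pos by (simp add: field_simps power2_eq_square power3_eq_cube)
  also have "\<dots> = ((N - 1) * L)\<^sup>2"
    using pos by (simp add: lam3 field_simps power2_eq_square)
  finally show "\<eta> * n * (lam * Imax) = (N - 1) * L"
    using pos \<open>\<eta> \<ge> 0\<close> by (subst (asm) power2_eq_iff_nonneg) auto
qed

lemma tuned_step_small:
  fixes Imax K N L n lam :: real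
  assumes pos: "Imax > 0" "N \<ge> 2" "L \<ge> 1" "n > 0" "0 < lam" "lam < 1"
    and lam3: "lam ^ 3 = K * N * (N - 1) / Imax * (L / n)"
  shows "K / n \<le> lam * Imax / 2"
proof -
  have "K / n = lam ^ 3 * Imax / (N * (N - 1) * L)"
    using pos by (simp add: lam3 field_simps)
  also have "\<dots> \<le> lam * Imax / (N * (N - 1) * L)"
    using pos by (intro divide_right_mono mult_right_mono) (auto simp: power3_eq_cube mult_le_one)
  also have "\<dots> \<le> lam * Imax / 2"
  proof -
    have "N * (N - 1) * L \<ge> 2 * 1 * 1" using pos by (intro mult_mono) auto
    then show ?thesis using pos by (intro divide_left_mono) auto
  qed
  finally show ?thesis .
qed

lemma regret_linear_bound:
  fixes I Imax K n lam \<eta> D B :: real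
  assumes I: "0 \<le> I" "I \<le> Imax" and K: "2 * Imax \<le> K" and n: "n \<ge> 1"
    and lam: "0 < lam" "lam < 1" and eta: "\<eta> > 0"
    and Kn: "K / n \<le> lam * Imax / 2"
    and tune: "\<eta> * n * (lam * Imax) = D"
    and regret: "\<eta> * n * ((1 - 1 / n) * I) - D \<le> (B + 1) * (\<eta> * (1 + lam) * K / (1 - lam))"
  shows "I \<le> K * B / n + 15 / 4 * (lam * Imax)"
proof -
  define X where "X = (1 - 1 / n) * I - lam * Imax"
  have "\<eta> * n * X = \<eta> * n * ((1 - 1 / n) * I) - D"
    by (simp add: X_def tune[symmetric] algebra_simps)
  also have "\<dots> \<le> (B + 1) * (\<eta> * (1 + lam) * K / (1 - lam))" by (rule regret)
  also have "\<dots> = \<eta> * n * ((B + 1) * (K / n) * (1 + lam) / (1 - lam))"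
    using n lam by (simp add: field_simps)
  finally have "X \<le> (B + 1) * (K / n) * (1 + lam) / (1 - lam)"
    by (rule mult_left_le_imp_le) (use eta n in auto)
  then have "X * (1 - lam) \<le> (B + 1) * (K / n) * (1 + lam) / (1 - lam) * (1 - lam)"
    using lam by (intro mult_right_mono) auto
  then have X_le: "X * (1 - lam) \<le> (B + 1) * (K / n) * (1 + lam)"
    using lam by simp
  have "(X - 2 * lam * I) * (1 + lam) \<le> X * (1 - lam)"
  proof -
    have "X \<le> I * (1 + lam)" using I lam n by (simp add: X_def algebra_simps)
    then have "X * (2 * lam) \<le> I * (1 + lam) * (2 * lam)" using lam by (intro mult_right_mono) auto
    then show ?thesis by (simp add: algebra_simps)
  qed
  with X_le have "(X - 2 * lam * I) * (1 + lam) \<le> (B + 1) * (K / n) * (1 + lam)" by linarith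
  then have X_bound: "X - 2 * lam * I \<le> (B + 1) * (K / n)"
    by (rule mult_right_le_imp_le) (use lam in auto)
  have "I / n \<le> Imax / n" using I n by (simp add: divide_right_mono)
  moreover have "Imax / n \<le> K / n / 2" using K n by (simp add: field_simps)
  moreover have "lam * I \<le> lam * Imax" using I lam by simp
  moreover have "(B + 1) * (K / n) = K * B / n + K / n" using n by (simp add: field_simps)
  ultimately show ?thesis using X_bound Kn by (simp add: X_def algebra_simps)
qed

lemma capacity_le:
  assumes "\<And>Q. is_pmf Q \<Longrightarrow> mutual_info Q W \<le> c"
  shows "capacity W \<le> c"
  unfolding capacity_def
proof (rule cSUP_least)
  show "prob_simplex \<noteq> {}" using unif_pmf by (auto simp: prob_simplex_def)
qed (use assms in \<open>auto simp: prob_simplex_def\<close>)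

lemma (in block_partition) tuned_information_bound:
  fixes Imax K lam \<eta> :: real
  defines "N \<equiv> real CARD('x)" and "L \<equiv> ln (real n)"
  assumes card_X: "CARD('x) \<ge> 2" and n_ge: "n \<ge> 3"
    and Imax: "0 < Imax" "2 * Imax \<le> K" and lam: "0 < lam" "lam < 1"
    and lam3: "lam ^ 3 = K * N * (N - 1) / Imax * (L / real n)"
    and eta: "\<eta> = sqrt ((N - 1) / (K * N * Imax) * (lam * L / real n))"
    and small: "\<forall>i\<in>{1..B+1}. real (m i) * mutual_info (Qhat lam \<eta> W m i) (block_avg W m i) \<le> K"
    and Q: "is_pmf Q" and I: "mutual_info Q (total_avg W n) \<le> Imax"
  shows "mutual_info Q (total_avg W n) \<le> K * real B / real n + 15 / 4 * (lam * Imax)"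
proof -
  have N: "N \<ge> 2" using card_X by (simp add: N_def)
  have L: "L \<ge> 1" using n_ge exp_le ln_ge_iff[of "real n" 1] by (simp add: L_def)
  have K: "K > 0" using Imax by simp
  note tuned = tuned_parameters[OF Imax(1) K N _ _ lam(1) lam3 eta]
  have "\<eta> * real n * ((1 - 1 / real n) * mutual_info Q (total_avg W n)) - (N - 1) * L
      \<le> (real B + 1) * (\<eta> * (1 + lam) * K / (1 - lam))"
    using regret_inequality[OF _ lam small _ Q, of "1 / real n"] tuned L n_ge
    by (simp add: N_def L_def ln_div add.commute)
  then show ?thesis
    using tuned tuned_step_small[OF Imax(1) N L _ lam lam3] I Imax n_ge lam L
      mutual_info_nonneg[OF Q total_avg_channel[OF chan n_pos]]
    by (intro regret_linear_bound) auto
qed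

text \<open>If \<open>\<lambda>* \<ge> 1\<close> the bound is trivial, \<open>I \<le> Imax \<le> \<lambda>* Imax\<close>; otherwise
  \<open>\<lambda> = \<lambda>*\<close> and the tuned case applies.  In both cases \<open>I \<le> K B / n + (15/4) \<lambda>* Imax\<close>,
  and \<open>\<lambda>* Imax\<close> is below the rate.\<close>

theorem lemma5:
  fixes W :: "nat \<Rightarrow> 'x::finite \<Rightarrow> 'y::finite \<Rightarrow> real"
    and m :: "nat \<Rightarrow> nat" and n B :: nat and K lam :: real
  defines "Imax \<equiv> log 2 (real (min CARD('x) CARD('y)))"
  defines "lam_star \<equiv> (K * real CARD('x) * (real CARD('x) - 1) / Imax * (ln (real n) / real n)) powr (1/3)"
  defines "\<eta> \<equiv> sqrt ((real CARD('x) - 1) / (K * real CARD('x) * Imax) * (lam * ln (real n) / real n))"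
  assumes card_X: "CARD('x) \<ge> 2"
    and n_ge: "n \<ge> 3"
    and K_ge: "K \<ge> 2 * Imax"
    and chan: "\<forall>t\<in>{1..n}. is_channel (W t)"
    and m_pos: "\<forall>i\<in>{1..B+1}. m i > 0"
    and m_sum: "(\<Sum>i\<in>{1..B+1}. m i) = n"
    and lam_star_case: "lam_star < 1 \<longrightarrow> lam = lam_star"
    and lam_range: "0 < lam" "lam < 1"
    and small: "\<forall>i\<in>{1..B+1}. real (m i) * mutual_info (Qhat lam \<eta> W m i) (block_avg W m i) \<le> K"
  shows "K * real B / real n \<ge> capacity (total_avg W n)
           - 4 * Imax powr (2/3) * real CARD('x) powr (2/3) * K powr (1/3)
               * (ln (real n) / real n) powr (1/3)"
proof -
  interpret block_partition W m n B using chan m_pos m_sum by unfold_locales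
  define N L where "N = real CARD('x)" and "L = ln (real n)"
  define rate where "rate = Imax powr (2/3) * N powr (2/3) * K powr (1/3) * (L / real n) powr (1/3)"
  have Imax_pos: "Imax > 0"
  proof (rule ccontr)
    assume "\<not> Imax > 0"
    moreover have "Imax \<ge> 0" by (simp add: Imax_def Suc_le_eq card_gt_0_iff)
    ultimately show False using lam_star_case lam_range by (simp add: lam_star_def)
  qed
  have lam_star3: "lam_star ^ 3 = K * N * (N - 1) / Imax * (L / real n)"
    unfolding lam_star_def N_def L_def using card_X n_ge K_ge Imax_pos
    by (intro powr_one_third_cube) simp
  have lam_star_rate: "lam_star * Imax \<le> rate"
    unfolding rate_def using card_X n_ge K_ge Imax_pos
    by (intro lam_Imax_le_rate[OF _ _ _ _ _ _ lam_star3]) (auto simp: N_def L_def lam_star_def)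
  have "mutual_info Q (total_avg W n) \<le> K * real B / real n + 4 * rate" if Q: "is_pmf Q" for Q
  proof -
    have I: "mutual_info Q (total_avg W n) \<le> Imax"
      unfolding Imax_def by (rule mutual_info_le_Imax[OF Q total_avg_channel[OF chan n_pos]])
    have "mutual_info Q (total_avg W n) \<le> K * real B / real n + 15 / 4 * (lam_star * Imax)"
    proof (cases "lam_star < 1")
      case True
      then show ?thesis using lam_star_case lam_star3 lam_range small Q I
        by (intro tuned_information_bound[OF card_X n_ge Imax_pos K_ge])
          (auto simp: \<eta>_def N_def L_def)
    next
      case False
      then have "Imax \<le> lam_star * Imax" using Imax_pos by simp
      moreover have "K * real B / real n \<ge> 0" using K_ge Imax_pos by simp
      ultimately show ?thesis using I Imax_pos by linarith
    qed
    moreover have "lam_star * Imax \<ge> 0" using Imax_pos by (simp add: lam_star_def)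
    ultimately show ?thesis using lam_star_rate by linarith
  qed
  then have "capacity (total_avg W n) \<le> K * real B / real n + 4 * rate" by (rule capacity_le)
  then show ?thesis unfolding rate_def N_def L_def by (simp only: mult.assoc)
qed

end
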